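(* Let $p$ be a prime and let $e\geq 2$ and $d\geq 2$ be integers. Let $\mathcal P(p^e,d)\subset\mathbb R^d$ be the convex hull of all $d$-dimensional vector-factorisations of $p^e$, and for $0\le k\le d$ let $f_k$ be the number of $k$-dimensional faces of $\mathcal P(p^e,d)$. Then $$f_0={e+d-1\choose d-1},\qquad f_1={d\choose 2}+{d\choose 2}{e+d-2\choose d-1},$$ $$f_k={d+1\choose k+1}+{d\choose k+1}{e+d-1\choose d}-{d\choose k+1}{e-k+d-1\choose d}\quad\text{for }2\leq k<d,$$ $$f_d=1.$$
   Context: $\mathbb N=\{0,1,2,\dots\}$. A $d$-dimensional vector-factorisation of an integer $N\geq1$ is an integral vector $(v_1,\dots,v_d)\in\mathbb N^d$ with $v_1v_2\cdots v_d=N$. *)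

theory Defs
  imports "HOL-Analysis.Analysis" "HOL-Computational_Algebra.Primes"
begin

definition vec_factorisations :: "nat \<Rightarrow> (real ^ 'd::finite) set" where
  "vec_factorisations N =
     {(\<chi> i. real (v i)) | v :: 'd \<Rightarrow> nat. (\<Prod>i\<in>UNIV. v i) = N}"

definition factorisation_polytope :: "nat \<Rightarrow> (real ^ 'd::finite) set" where
  "factorisation_polytope N = convex hull (vec_factorisations N :: (real ^ 'd) set)"

definition num_faces :: "nat \<Rightarrow> ('a::euclidean_space) set \<Rightarrow> nat" where
  "num_faces k S = card {F. F face_of S \<and> aff_dim F = int k}"

end

theory Submission
  imports Defs
begin

definition weak_compositions :: "nat \<Rightarrow> ('d::finite \<Rightarrow> nat) set" where
  "weak_compositions n = {a. sum a UNIV = n}"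

definition pow_vec :: "real \<Rightarrow> ('d::finite \<Rightarrow> nat) \<Rightarrow> real^'d" where
  "pow_vec p a = (\<chi> i. p ^ a i)"

lemma pow_vec_nth [simp]: "pow_vec p a $ i = p ^ a i"
  by (simp add: pow_vec_def)

lemma inj_pow_vec: "p > 1 \<Longrightarrow> inj (pow_vec p)"
  by (rule injI) (simp add: vec_eq_iff fun_eq_iff)

lemma weak_compositions_le: "a \<in> weak_compositions n \<Longrightarrow> a i \<le> n"
  using member_le_sum[of i UNIV a] by (simp add: weak_compositions_def)

lemma finite_weak_compositions: "finite (weak_compositions n :: ('d::finite \<Rightarrow> nat) set)"
proof (rule finite_subset)
  show "weak_compositions n \<subseteq> PiE (UNIV :: 'd set) (\<lambda>_. {..n})"
    by (auto simp: PiE_def extensional_def weak_compositions_le)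
qed (simp add: finite_PiE)

lemma card_weak_compositions:
  "card (weak_compositions n :: ('d::finite \<Rightarrow> nat) set) = (n + CARD('d) - 1) choose (CARD('d) - 1)"
proof -
  let ?d = "CARD('d)"
  obtain g where g: "bij_betw g {..<?d} (UNIV :: 'd set)"
    using bij_betw_from_nat_into_finite[of "UNIV :: 'd set"] by auto
  define to_list where "to_list a = map (a \<circ> g) [0..<?d]" for a :: "'d \<Rightarrow> nat"
  define of_list where "of_list l = (\<lambda>x. l ! inv_into {..<?d} g x)" for l :: "nat list"
  have sum_to_list: "sum_list (to_list a) = sum a UNIV" for a
    using sum.reindex_bij_betw[OF g, of a]
    by (simp add: to_list_def sum_list_sum_nth atLeast0LessThan)
  have "bij_betw to_list (weak_compositions n) {l. length l = ?d \<and> sum_list l = n}"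
  proof (rule bij_betw_byWitness[where f' = of_list])
    have inv: "inv_into {..<?d} g x < ?d" "g (inv_into {..<?d} g x) = x" for x
    proof -
      have "x \<in> g ` {..<?d}" using g by (simp add: bij_betw_def)
      then show "inv_into {..<?d} g x < ?d" "g (inv_into {..<?d} g x) = x"
        using inv_into_into[of x g "{..<?d}"] f_inv_into_f[of x g] by auto
    qed
    show "\<forall>a \<in> weak_compositions n. of_list (to_list a) = a"
      by (simp add: of_list_def to_list_def inv fun_eq_iff)
    show "\<forall>l \<in> {l. length l = ?d \<and> sum_list l = n}. to_list (of_list l) = l"
      using g by (auto simp: of_list_def to_list_def bij_betw_def list_eq_iff_nth_eq)
    show "to_list ` weak_compositions n \<subseteq> {l. length l = ?d \<and> sum_list l = n}"
      using sum_to_list by (auto simp: to_list_def weak_compositions_def)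
    have "sum (of_list l) UNIV = sum_list l" if "length l = ?d" for l
    proof -
      have "of_list l (g i) = l ! i" if "i < ?d" for i
        using g that by (simp add: of_list_def bij_betw_def inv_into_f_f)
      then show ?thesis
        using sum.reindex_bij_betw[OF g, of "of_list l"] \<open>length l = ?d\<close>
        by (simp add: sum_list_sum_nth atLeast0LessThan)
    qed
    then show "of_list ` {l. length l = ?d \<and> sum_list l = n} \<subseteq> weak_compositions n"
      by (auto simp: weak_compositions_def)
  qed
  then have "card (weak_compositions n :: ('d \<Rightarrow> nat) set) = (n + ?d - 1) choose n"
    by (simp add: bij_betw_same_card card_length_sum_list)
  moreover have "n \<le> n + ?d - 1" and "n + ?d - 1 - n = ?d - 1"
    using zero_less_card_finite[where 'a='d] by linarith+
  ultimately show ?thesis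
    using binomial_symmetric[of n "n + ?d - 1"] by simp
qed

lemma vec_factorisations_prime_power:
  assumes "prime p"
  shows "vec_factorisations (p ^ e) = pow_vec (real p) ` weak_compositions e"
proof (intro equalityI subsetI)
  fix x :: "real^'d"
  assume "x \<in> vec_factorisations (p ^ e)"
  then obtain v :: "'d \<Rightarrow> nat" where v: "(\<Prod>i\<in>UNIV. v i) = p ^ e" and x: "x = (\<chi> i. real (v i))"
    unfolding vec_factorisations_def by blast
  have "\<exists>k. v i = p ^ k" for i
  proof -
    have "v i dvd p ^ e"
      using dvd_prodI[of UNIV i v] v by simp
    then show ?thesis
      using divides_primepow_nat[OF assms] by blast
  qed
  then obtain a where a: "\<And>i. v i = p ^ a i"
    by metis
  have "p ^ sum a UNIV = p ^ e"
    using v by (simp add: a power_sum)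
  then have "a \<in> weak_compositions e"
    using prime_gt_1_nat[OF assms] by (simp add: weak_compositions_def power_inject_exp)
  moreover have "x = pow_vec (real p) a"
    by (simp add: x a vec_eq_iff)
  ultimately show "x \<in> pow_vec (real p) ` weak_compositions e"
    by blast
next
  fix x :: "real^'d"
  assume "x \<in> pow_vec (real p) ` weak_compositions e"
  then obtain a where a: "sum a UNIV = e" and x: "x = pow_vec (real p) a"
    by (auto simp: weak_compositions_def)
  have "(\<Prod>i\<in>UNIV. p ^ a i) = p ^ e"
    using a by (simp flip: power_sum)
  moreover have "x = (\<chi> i. real (p ^ a i))"
    by (simp add: x vec_eq_iff)
  ultimately show "x \<in> vec_factorisations (p ^ e)"
    unfolding vec_factorisations_def by (intro CollectI exI[of _ "\<lambda>i. p ^ a i"]) simp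
qed

definition maximisers :: "('a \<Rightarrow> 'b::real_inner) \<Rightarrow> 'a set \<Rightarrow> 'b \<Rightarrow> 'a set" where
  "maximisers \<phi> A c = {a \<in> A. \<forall>b\<in>A. c \<bullet> \<phi> b \<le> c \<bullet> \<phi> a}"

lemma maximisers_subset: "maximisers \<phi> A c \<subseteq> A"
  by (auto simp: maximisers_def)

lemma maximisers_nonempty:
  assumes "finite A" "A \<noteq> {}"
  shows "maximisers \<phi> A c \<noteq> {}"
proof -
  have "Max ((\<lambda>a. c \<bullet> \<phi> a) ` A) \<in> (\<lambda>a. c \<bullet> \<phi> a) ` A"
    using assms by (intro Max_in) auto
  then obtain a where "a \<in> A" "c \<bullet> \<phi> a = Max ((\<lambda>a. c \<bullet> \<phi> a) ` A)"
    by auto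
  then show ?thesis
    using assms(1) by (auto simp: maximisers_def)
qed

lemma maximisers_eq_level:
  assumes "\<And>a. a \<in> A \<Longrightarrow> c \<bullet> \<phi> a \<le> \<beta>" and "a\<^sub>0 \<in> A" "c \<bullet> \<phi> a\<^sub>0 = \<beta>"
  shows "maximisers \<phi> A c = {a \<in> A. c \<bullet> \<phi> a = \<beta>}"
  using assms by (force simp: maximisers_def)

lemma image_maximisers:
  assumes "\<And>a. a \<in> A \<Longrightarrow> c \<bullet> \<phi> a \<le> \<beta>" and "a\<^sub>0 \<in> A" "c \<bullet> \<phi> a\<^sub>0 = \<beta>"
  shows "\<phi> ` maximisers \<phi> A c = {x \<in> \<phi> ` A. c \<bullet> x = \<beta>}"
  using maximisers_eq_level[of A c \<phi> \<beta>, OF assms] by auto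

lemma convex_hull_Int_supporting_hyperplane:
  fixes T :: "'a::euclidean_space set"
  assumes "finite T" and "convex hull T \<subseteq> {x. c \<bullet> x \<le> \<beta>}"
  shows "convex hull T \<inter> {x. c \<bullet> x = \<beta>} = convex hull {t\<in>T. c \<bullet> t = \<beta>}"
proof
  have "convex hull T \<inter> {x. c \<bullet> x = \<beta>} face_of convex hull T"
    using assms(2) by (intro face_of_Int_supporting_hyperplane_le) auto
  then obtain S where "S \<subseteq> T" and S: "convex hull T \<inter> {x. c \<bullet> x = \<beta>} = convex hull S"
    using face_of_convex_hull_subset[OF finite_imp_compact[OF assms(1)]] by blast
  moreover have "S \<subseteq> {x. c \<bullet> x = \<beta>}"
    using S hull_subset[of S convex] by auto
  ultimately show "convex hull T \<inter> {x. c \<bullet> x = \<beta>} \<subseteq> convex hull {t\<in>T. c \<bullet> t = \<beta>}"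
    by (metis (mono_tags, lifting) hull_mono mem_Collect_eq subset_eq)
next
  show "convex hull {t\<in>T. c \<bullet> t = \<beta>} \<subseteq> convex hull T \<inter> {x. c \<bullet> x = \<beta>}"
    using hull_subset[of T convex]
    by (intro hull_minimal) (auto simp: convex_Int convex_hyperplane)
qed

lemma convex_hull_maximisers:
  fixes \<phi> :: "'a \<Rightarrow> 'b::euclidean_space"
  assumes "finite A" and "a\<^sub>0 \<in> maximisers \<phi> A c"
  shows "convex hull (\<phi> ` maximisers \<phi> A c) = convex hull (\<phi> ` A) \<inter> {x. c \<bullet> x = c \<bullet> \<phi> a\<^sub>0}"
proof -
  have le: "c \<bullet> \<phi> a \<le> c \<bullet> \<phi> a\<^sub>0" if "a \<in> A" for a
    using assms(2) that by (auto simp: maximisers_def)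
  have "convex hull (\<phi> ` A) \<subseteq> {x. c \<bullet> x \<le> c \<bullet> \<phi> a\<^sub>0}"
    using le by (intro hull_minimal) (auto simp: convex_halfspace_le)
  then show ?thesis
    using convex_hull_Int_supporting_hyperplane[of "\<phi> ` A"] image_maximisers[of A c \<phi>, OF le]
      assms maximisers_subset by fastforce
qed

lemma convex_hull_maximisers_face_of:
  fixes \<phi> :: "'a \<Rightarrow> 'b::euclidean_space"
  assumes "finite A"
  shows "convex hull (\<phi> ` maximisers \<phi> A c) face_of convex hull (\<phi> ` A)"
proof (cases "maximisers \<phi> A c = {}")
  case False
  then obtain a\<^sub>0 where a\<^sub>0: "a\<^sub>0 \<in> maximisers \<phi> A c"
    by blast
  have "convex hull (\<phi> ` A) \<subseteq> {x. c \<bullet> x \<le> c \<bullet> \<phi> a\<^sub>0}"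
    using a\<^sub>0 by (intro hull_minimal) (auto simp: maximisers_def convex_halfspace_le)
  then show ?thesis
    unfolding convex_hull_maximisers[OF assms a\<^sub>0]
    by (intro face_of_Int_supporting_hyperplane_le) auto
qed simp

lemma face_of_convex_hull_eq_maximisers:
  fixes \<phi> :: "'a \<Rightarrow> 'b::euclidean_space"
  assumes "finite A" and "F face_of convex hull (\<phi> ` A)" and "F \<noteq> {}"
  obtains c where "F = convex hull (\<phi> ` maximisers \<phi> A c)"
proof -
  have "polyhedron (convex hull (\<phi> ` A))"
    using assms(1) by (intro polytope_imp_polyhedron polytope_convex_hull) simp
  then have "F exposed_face_of convex hull (\<phi> ` A)"
    using assms(2) exposed_face_of_polyhedron by blast
  then have "\<exists>c \<beta>. convex hull (\<phi> ` A) \<subseteq> {x. c \<bullet> x \<le> \<beta>} \<and>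
      F = convex hull (\<phi> ` A) \<inter> {x. c \<bullet> x = \<beta>}"
    unfolding exposed_face_of
  proof (elim conjE disjE exE)
    assume "F = convex hull (\<phi> ` A)"
    then show ?thesis
      by (intro exI[of _ 0]) auto
  qed (use assms(3) in auto)
  then obtain c \<beta> where hull_le: "convex hull (\<phi> ` A) \<subseteq> {x. c \<bullet> x \<le> \<beta>}"
    and F: "F = convex hull (\<phi> ` A) \<inter> {x. c \<bullet> x = \<beta>}"
    by blast
  have F': "F = convex hull {x \<in> \<phi> ` A. c \<bullet> x = \<beta>}"
    using convex_hull_Int_supporting_hyperplane[OF _ hull_le] F assms(1) by simp
  then obtain a\<^sub>0 where "a\<^sub>0 \<in> A" "c \<bullet> \<phi> a\<^sub>0 = \<beta>"
    using assms(3) by auto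
  moreover have "c \<bullet> \<phi> a \<le> \<beta>" if "a \<in> A" for a
    using hull_le hull_subset[of "\<phi> ` A" convex] that by auto
  ultimately have "\<phi> ` maximisers \<phi> A c = {x \<in> \<phi> ` A. c \<bullet> x = \<beta>}"
    by (intro image_maximisers)
  then show ?thesis
    by (intro that[of c]) (simp add: F')
qed

lemma inj_on_convex_hull_image:
  fixes \<phi> :: "'a \<Rightarrow> 'b::euclidean_space"
  assumes "finite A" and "inj_on \<phi> A" and vertex: "\<And>a. a \<in> A \<Longrightarrow> \<exists>c. maximisers \<phi> A c = {a}"
  shows "inj_on (\<lambda>M. convex hull (\<phi> ` M)) (Pow A)"
proof -
  have "M \<subseteq> N"
    if M: "M \<subseteq> A" and N: "N \<subseteq> A" and eq: "convex hull (\<phi> ` M) = convex hull (\<phi> ` N)" for M N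
  proof
    fix a
    assume "a \<in> M"
    then obtain c where "maximisers \<phi> A c = {a}"
      using M vertex by blast
    then have "\<phi> a extreme_point_of convex hull (\<phi> ` A)"
      using convex_hull_maximisers_face_of[OF assms(1), of \<phi> c] by (simp add: face_of_singleton)
    moreover have "\<phi> a \<in> convex hull (\<phi> ` N)"
      using \<open>a \<in> M\<close> eq hull_subset[of "\<phi> ` M" convex] by auto
    moreover have "convex hull (\<phi> ` N) \<subseteq> convex hull (\<phi> ` A)"
      using N by (intro hull_mono image_mono)
    ultimately have "\<phi> a extreme_point_of convex hull (\<phi> ` N)"
      by (auto simp: extreme_point_of_def)
    then have "\<phi> a \<in> \<phi> ` N"
      by (rule extreme_point_of_convex_hull)
    then show "a \<in> N"
      using assms(2) M N \<open>a \<in> M\<close> by (auto dest: inj_onD)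
  qed
  then show ?thesis
    by (intro inj_onI) (simp add: subset_antisym)
qed

lemma num_faces_convex_hull_image:
  fixes \<phi> :: "'a \<Rightarrow> 'b::euclidean_space"
  assumes "finite A" and "inj_on \<phi> A" and "\<And>a. a \<in> A \<Longrightarrow> \<exists>c. maximisers \<phi> A c = {a}"
  shows "num_faces k (convex hull (\<phi> ` A)) =
    card {M \<in> range (maximisers \<phi> A). aff_dim (\<phi> ` M) = int k}"
proof -
  let ?faces = "{M \<in> range (maximisers \<phi> A). aff_dim (\<phi> ` M) = int k}"
  have "{F. F face_of convex hull (\<phi> ` A) \<and> aff_dim F = int k} = (\<lambda>M. convex hull (\<phi> ` M)) ` ?faces"
  proof (intro equalityI subsetI)
    fix F
    assume F: "F \<in> {F. F face_of convex hull (\<phi> ` A) \<and> aff_dim F = int k}"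
    then have "F \<noteq> {}"
      by auto
    then obtain c where "F = convex hull (\<phi> ` maximisers \<phi> A c)"
      using face_of_convex_hull_eq_maximisers[OF assms(1)] F by blast
    with F show "F \<in> (\<lambda>M. convex hull (\<phi> ` M)) ` ?faces"
      by (auto simp: aff_dim_convex_hull)
  qed (auto simp: aff_dim_convex_hull convex_hull_maximisers_face_of[OF assms(1)])
  moreover have "inj_on (\<lambda>M. convex hull (\<phi> ` M)) ?faces"
    by (rule inj_on_subset[OF inj_on_convex_hull_image[OF assms]]) (auto simp: maximisers_def)
  ultimately show ?thesis
    by (simp add: num_faces_def card_image)
qed

lemma num_vertices_convex_hull_image:
  fixes \<phi> :: "'a \<Rightarrow> 'b::euclidean_space"
  assumes "finite A" and "inj_on \<phi> A" and "\<And>a. a \<in> A \<Longrightarrow> \<exists>c. maximisers \<phi> A c = {a}"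
  shows "num_faces 0 (convex hull (\<phi> ` A)) = card A"
proof -
  have "{M \<in> range (maximisers \<phi> A). aff_dim (\<phi> ` M) = 0} = (\<lambda>a. {a}) ` A"
  proof (intro equalityI subsetI)
    fix M
    assume M: "M \<in> {M \<in> range (maximisers \<phi> A). aff_dim (\<phi> ` M) = 0}"
    then have "aff_dim (\<phi> ` M) = 0"
      by simp
    then obtain x where x: "\<phi> ` M = {x}"
      by (auto simp: aff_dim_eq_0)
    then obtain a where "a \<in> M"
      by auto
    moreover have "M \<subseteq> A"
      using M by (auto simp: maximisers_def)
    moreover have "b = a" if "b \<in> M" for b
    proof -
      have "\<phi> b = \<phi> a"
        using x that \<open>a \<in> M\<close> by (metis imageI singletonD)
      then show ?thesis
        using inj_onD[OF assms(2)] that \<open>a \<in> M\<close> \<open>M \<subseteq> A\<close> by blast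
    qed
    ultimately have "M = {a}"
      by blast
    then show "M \<in> (\<lambda>a. {a}) ` A"
      using \<open>M \<subseteq> A\<close> by auto
  next
    fix M
    assume "M \<in> (\<lambda>a. {a}) ` A"
    then show "M \<in> {M \<in> range (maximisers \<phi> A). aff_dim (\<phi> ` M) = 0}"
      using assms(3) by (auto simp: image_iff) (metis rangeI)
  qed
  then show ?thesis
    using num_faces_convex_hull_image[OF assms, of 0] by (simp add: card_image)
qed

lemma increasing_differences_mono:
  fixes f :: "nat \<Rightarrow> 'a::linordered_ab_group_add"
  assumes incr: "\<And>t. f (Suc t) - f t < f (Suc (Suc t)) - f (Suc t)"
  shows increasing_differences_right: "f b \<le> f (Suc b) \<Longrightarrow> Suc b < t \<Longrightarrow> f (Suc b) < f t"
    and increasing_differences_left: "f (Suc c) \<le> f c \<Longrightarrow> t < c \<Longrightarrow> f c < f t"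
proof -
  have diff_less: "f (Suc s) - f s < f (Suc t) - f t" if "s < t" for s t
    using lift_Suc_mono_less[of "\<lambda>t. f (Suc t) - f t", OF incr that] .
  show "f (Suc b) < f t" if "f b \<le> f (Suc b)" "Suc b < t"
  proof (rule lift_Suc_mono_less_ivl[where N = "{Suc b..}"])
    show "f n < f (Suc n)" if "n \<in> {Suc b..}" for n
    proof -
      have "0 \<le> f (Suc b) - f b"
        using \<open>f b \<le> f (Suc b)\<close> by simp
      also have "\<dots> < f (Suc n) - f n"
        using diff_less[of b n] that by simp
      finally have "0 < f (Suc n) - f n" .
      then show ?thesis
        by simp
    qed
  qed (use that in auto)
  show "f c < f t" if "f (Suc c) \<le> f c" "t < c"
  proof -
    have "- f t < - f c"
    proof (rule lift_Suc_mono_less_ivl[where N = "{..<c}"])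
      show "- f n < - f (Suc n)" if "n \<in> {..<c}" for n
      proof -
        have "f (Suc n) - f n < f (Suc c) - f c"
          using diff_less[of n c] that by simp
        also have "\<dots> \<le> 0"
          using \<open>f (Suc c) \<le> f c\<close> by simp
        finally have "f (Suc n) - f n < 0" .
        then show ?thesis
          by simp
      qed
    qed (use that in auto)
    then show ?thesis
      by simp
  qed
qed

lemma increasing_differences_minimum:
  fixes f :: "nat \<Rightarrow> 'a::linordered_ab_group_add"
  assumes incr: "\<And>t. f (Suc t) - f t < f (Suc (Suc t)) - f (Suc t)"
    and right: "f b \<le> f (Suc b)" and left: "\<And>c. b = Suc c \<Longrightarrow> f b \<le> f c"
  shows "f b \<le> f t"
proof (cases t b rule: linorder_cases)
  case less
  then obtain c where b: "b = Suc c"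
    using less_imp_Suc_add by blast
  then show ?thesis
    using increasing_differences_left[of f c t, OF incr] left[OF b] less
    by (cases "t = c") auto
next
  case greater
  then show ?thesis
    using increasing_differences_right[of f b t, OF incr right] right
    by (cases "t = Suc b") auto
qed simp

lemma increasing_differences_minimisers:
  fixes f :: "nat \<Rightarrow> 'a::linordered_ab_group_add"
  assumes incr: "\<And>t. f (Suc t) - f t < f (Suc (Suc t)) - f (Suc t)"
    and right: "f b \<le> f (Suc b)" and left: "\<And>c. b = Suc c \<Longrightarrow> f b < f c"
  shows "f t = f b \<longleftrightarrow> t = b \<or> (t = Suc b \<and> f (Suc b) = f b)"
proof (cases t b rule: linorder_cases)
  case less
  then obtain c where b: "b = Suc c"
    using less_imp_Suc_add by blast
  then show ?thesis
    using increasing_differences_left[of f c t, OF incr] left[OF b] less_imp_le[OF left[OF b]] less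
    by (cases "t = c") auto
next
  case greater
  then show ?thesis
    using increasing_differences_right[of f b t, OF incr right] right
    by (cases "t = Suc b") auto
qed simp

lemma pow_minus_linear_increasing_differences:
  fixes p w lam :: real
  assumes "p > 1" and "w > 0"
  defines "f \<equiv> \<lambda>t. w * p ^ t - lam * real t"
  shows "f (Suc t) - f t = w * (p - 1) * p ^ t - lam"
    and "f (Suc t) - f t < f (Suc (Suc t)) - f (Suc t)"
proof -
  show diff: "f (Suc t) - f t = w * (p - 1) * p ^ t - lam" for t
    by (simp add: f_def algebra_simps)
  have "w * (p - 1) * p ^ t < w * (p - 1) * p ^ Suc t"
    using assms by simp
  then show "f (Suc t) - f t < f (Suc (Suc t)) - f (Suc t)"
    unfolding diff by simp
qed

lemma sum_pow_minus_one_le: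
  fixes p :: "'b::linordered_idom"
  assumes "p \<ge> 1" and "finite A"
  shows "(\<Sum>i\<in>A. p ^ a i - 1) \<le> p ^ sum a A - 1"
  using assms(2)
proof (induction A rule: finite_induct)
  case (insert x A)
  have "0 \<le> (p ^ a x - 1) * (p ^ sum a A - 1)"
    using assms(1) by (simp add: one_le_power)
  then have "(p ^ a x - 1) + (p ^ sum a A - 1) \<le> p ^ (a x + sum a A) - 1"
    by (simp add: power_add algebra_simps)
  with insert show ?case
    by simp
qed simp

lemma sum_pow_minus_one_less:
  fixes p :: "'b::linordered_idom"
  assumes "p > 1" and "finite A" and "i \<in> A" "j \<in> A" "i \<noteq> j" and "a i \<noteq> 0" "a j \<noteq> 0"
  shows "(\<Sum>k\<in>A. p ^ a k - 1) < p ^ sum a A - 1"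
proof -
  let ?s = "sum a (A - {i})"
  have "a j \<le> ?s"
    using assms by (intro member_le_sum) auto
  then have "0 < (p ^ a i - 1) * (p ^ ?s - 1)"
    using assms by (simp add: one_less_power)
  then have "(p ^ a i - 1) + (p ^ ?s - 1) < p ^ (a i + ?s) - 1"
    by (simp add: power_add algebra_simps)
  moreover have "(\<Sum>k\<in>A - {i}. p ^ a k - 1) \<le> p ^ ?s - 1"
    using assms by (intro sum_pow_minus_one_le) auto
  ultimately show ?thesis
    using assms by (simp add: sum.remove)
qed

abbreviation comp_maximisers :: "real \<Rightarrow> nat \<Rightarrow> real^'d \<Rightarrow> ('d::finite \<Rightarrow> nat) set" where
  "comp_maximisers p e \<equiv> maximisers (pow_vec p) (weak_compositions e)"

definition pure_comp :: "nat \<Rightarrow> 'd \<Rightarrow> ('d::finite \<Rightarrow> nat)" where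
  "pure_comp e i = (\<lambda>j. if j = i then e else 0)"

definition supported_comps :: "nat \<Rightarrow> 'd set \<Rightarrow> ('d::finite \<Rightarrow> nat) set" where
  "supported_comps e I = {a \<in> weak_compositions e. \<forall>i. a i \<noteq> 0 \<longrightarrow> i \<in> I}"

definition box_comps :: "nat \<Rightarrow> ('d \<Rightarrow> nat) \<Rightarrow> 'd set \<Rightarrow> ('d::finite \<Rightarrow> nat) set" where
  "box_comps e b J = {a \<in> weak_compositions e. \<forall>i. a i = b i \<or> (i \<in> J \<and> a i = Suc (b i))}"

lemma pure_comp_weak_compositions [simp]: "pure_comp e i \<in> weak_compositions e"
  by (simp add: pure_comp_def weak_compositions_def)

lemma pure_comp_eq_iff [simp]: "e \<ge> 1 \<Longrightarrow> pure_comp e i = pure_comp e j \<longleftrightarrow> i = j"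
  by (auto simp: pure_comp_def fun_eq_iff)

lemma pure_comp_in_supported_comps [simp]: "e \<ge> 1 \<Longrightarrow> pure_comp e i \<in> supported_comps e I \<longleftrightarrow> i \<in> I"
  unfolding supported_comps_def by (auto simp: pure_comp_def weak_compositions_def)

lemma weak_composition_eq_pure_comp:
  assumes "a \<in> weak_compositions e" and "\<And>j. a j \<noteq> 0 \<Longrightarrow> j = i"
  shows "a = pure_comp e i"
proof -
  have "sum a UNIV = (\<Sum>j\<in>UNIV. if j = i then a i else 0)"
    using assms(2) by (intro sum.cong) auto
  then have "a i = e"
    using assms(1) by (simp add: weak_compositions_def)
  then show ?thesis
    unfolding pure_comp_def fun_eq_iff using assms(2) by metis
qed

lemma inner_pow_vec: "c \<bullet> pow_vec p a = (\<Sum>i\<in>UNIV. c$i * p ^ a i)"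
  by (simp add: inner_vec_def)

lemma inner_pow_vec_shifted: "c \<bullet> pow_vec p a = (\<Sum>i\<in>UNIV. c$i) + (\<Sum>i\<in>UNIV. c$i * (p ^ a i - 1))"
  by (simp add: inner_pow_vec algebra_simps sum_subtractf)

lemma inner_pow_vec_pure_comp: "c \<bullet> pow_vec p (pure_comp e i) = (\<Sum>j\<in>UNIV. c$j) + c$i * (p ^ e - 1)"
proof -
  have "(\<Sum>j\<in>UNIV. c$j * (p ^ pure_comp e i j - 1)) = (\<Sum>j\<in>UNIV. if j = i then c$i * (p ^ e - 1) else 0)"
    by (intro sum.cong) (auto simp: pure_comp_def)
  then show ?thesis
    by (simp add: inner_pow_vec_shifted)
qed

lemma comp_maximisers_pos:
  fixes c :: "real^'d::finite"
  assumes p: "p > 1" and e: "e \<ge> 1" and \<mu>: "\<mu> = Max (range (($) c))" "\<mu> > 0"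
  shows "comp_maximisers p e c = pure_comp e ` {i. c$i = \<mu>}"
proof -
  let ?top = "(\<Sum>i\<in>UNIV. c$i) + \<mu> * (p ^ e - 1)"
  have c_le: "c$i \<le> \<mu>" for i
    using \<mu>(1) by simp
  have "\<mu> \<in> range (($) c)"
    unfolding \<mu>(1) by (rule Max_in) auto
  then obtain i\<^sub>0 where i\<^sub>0: "c$i\<^sub>0 = \<mu>"
    by auto
  have pe: "p ^ e - 1 > 0"
    using p e by (simp add: one_less_power)
  have bound: "c \<bullet> pow_vec p a \<le> (\<Sum>i\<in>UNIV. c$i) + \<mu> * (\<Sum>i\<in>UNIV. p ^ a i - 1)" for a
    unfolding inner_pow_vec_shifted sum_distrib_left
    using c_le p by (auto intro!: sum_mono mult_right_mono simp: one_le_power)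
  have le_top: "c \<bullet> pow_vec p a \<le> ?top" if "a \<in> weak_compositions e" for a
  proof -
    have "\<mu> * (\<Sum>i\<in>UNIV. p ^ a i - 1) \<le> \<mu> * (p ^ e - 1)"
      using sum_pow_minus_one_le[of p UNIV a] p \<mu>(2) that
      by (intro mult_left_mono) (auto simp: weak_compositions_def)
    then show ?thesis
      using bound[of a] by linarith
  qed
  have pure_if_top: "a \<in> pure_comp e ` {i. c$i = \<mu>}"
    if a: "a \<in> weak_compositions e" "c \<bullet> pow_vec p a = ?top" for a
  proof -
    have "j = i" if "a i \<noteq> 0" "a j \<noteq> 0" for i j
    proof (rule ccontr)
      assume "j \<noteq> i"
      then have "(\<Sum>k\<in>UNIV. p ^ a k - 1) < p ^ e - 1"
        using sum_pow_minus_one_less[of p UNIV i j a] p that a(1) by (simp add: weak_compositions_def)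
      then have "\<mu> * (\<Sum>k\<in>UNIV. p ^ a k - 1) < \<mu> * (p ^ e - 1)"
        using \<mu>(2) by (rule mult_strict_left_mono)
      then show False
        using bound[of a] a(2) by linarith
    qed
    moreover have "sum a UNIV \<noteq> 0"
      using a(1) e by (simp add: weak_compositions_def)
    then obtain i where "a i \<noteq> 0"
      by (metis UNIV_I sum.neutral)
    ultimately have "a = pure_comp e i"
      using a(1) weak_composition_eq_pure_comp by blast
    moreover have "c$i = \<mu>"
      using a(2) pe unfolding \<open>a = pure_comp e i\<close> inner_pow_vec_pure_comp by simp
    ultimately show ?thesis
      by blast
  qed
  have "comp_maximisers p e c = {a \<in> weak_compositions e. c \<bullet> pow_vec p a = ?top}"
    using le_top by (rule maximisers_eq_level[where a\<^sub>0 = "pure_comp e i\<^sub>0"])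
      (simp_all add: inner_pow_vec_pure_comp i\<^sub>0)
  also have "\<dots> = pure_comp e ` {i. c$i = \<mu>}"
    using pure_if_top by (auto simp: inner_pow_vec_pure_comp)
  finally show ?thesis .
qed

lemma comp_maximisers_zero:
  fixes c :: "real^'d::finite"
  assumes p: "p > 1" and \<mu>: "Max (range (($) c)) = 0"
  shows "comp_maximisers p e c = supported_comps e {i. c$i = 0}"
proof -
  have c_le: "c$i \<le> 0" for i
    using \<mu> Max_ge[of "range (($) c)" "c$i"] by simp
  have "0 \<in> range (($) c)"
    unfolding \<mu>[symmetric] by (rule Max_in) auto
  then obtain i\<^sub>0 where i\<^sub>0: "c$i\<^sub>0 = 0"
    by auto
  have term_le: "c$i * (p ^ a i - 1) \<le> 0" for i a
    using c_le[of i] p by (simp add: mult_nonpos_nonneg one_le_power)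
  have term_eq: "c$i * (p ^ a i - 1) = 0 \<longleftrightarrow> (a i \<noteq> 0 \<longrightarrow> c$i = 0)" for i a
  proof -
    have "p ^ a i - 1 \<noteq> 0" if "a i \<noteq> 0"
      using one_less_power[OF p, of "a i"] that by simp
    then show ?thesis
      by auto
  qed
  have sum_eq: "(\<Sum>i\<in>UNIV. c$i * (p ^ a i - 1)) = 0 \<longleftrightarrow> (\<forall>i. a i \<noteq> 0 \<longrightarrow> c$i = 0)" for a
    using sum_nonneg_eq_0_iff[of UNIV "\<lambda>i. - (c$i * (p ^ a i - 1))"] term_le term_eq
    by (auto simp: sum_negf)
  have "comp_maximisers p e c = {a \<in> weak_compositions e. c \<bullet> pow_vec p a = (\<Sum>i\<in>UNIV. c$i)}"
  proof (rule maximisers_eq_level[where a\<^sub>0 = "pure_comp e i\<^sub>0"])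
    show "c \<bullet> pow_vec p a \<le> (\<Sum>i\<in>UNIV. c$i)" for a
      unfolding inner_pow_vec_shifted using term_le by (simp add: sum_nonpos)
  qed (simp_all add: inner_pow_vec_pure_comp i\<^sub>0)
  also have "\<dots> = supported_comps e {i. c$i = 0}"
    unfolding inner_pow_vec_shifted using sum_eq by (auto simp: supported_comps_def)
  finally show ?thesis .
qed

lemma comp_maximisers_Lagrange:
  fixes w :: "'d::finite \<Rightarrow> real" and lam :: real
  assumes t\<^sub>0: "t\<^sub>0 \<in> weak_compositions e"
    and min: "\<And>i t. w i * p ^ t\<^sub>0 i - lam * t\<^sub>0 i \<le> w i * p ^ t - lam * t"
  shows "comp_maximisers p e (\<chi> i. - w i) =
    {a \<in> weak_compositions e. \<forall>i. w i * p ^ a i - lam * a i = w i * p ^ t\<^sub>0 i - lam * t\<^sub>0 i}"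
proof -
  define g where "g i t = w i * p ^ t - lam * real t" for i t
  have inner_eq: "(\<chi> i. - w i) \<bullet> pow_vec p a = - (\<Sum>i\<in>UNIV. g i (a i)) - lam * e"
    if "a \<in> weak_compositions e" for a
  proof -
    have "(\<Sum>i\<in>UNIV. real (a i)) = e"
      using that by (simp add: weak_compositions_def flip: of_nat_sum)
    then show ?thesis
      by (simp add: inner_pow_vec g_def sum_subtractf sum_negf flip: sum_distrib_left)
  qed
  have excess_nonneg: "g i (a i) - g i (t\<^sub>0 i) \<ge> 0" for a i
    using min by (simp add: g_def)
  have excess: "(\<Sum>i\<in>UNIV. g i (a i)) - (\<Sum>i\<in>UNIV. g i (t\<^sub>0 i)) = (\<Sum>i\<in>UNIV. g i (a i) - g i (t\<^sub>0 i))"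
    for a
    by (simp add: sum_subtractf)
  have excess_sum_nonneg: "(\<Sum>i\<in>UNIV. g i (a i) - g i (t\<^sub>0 i)) \<ge> 0" for a
    by (intro sum_nonneg excess_nonneg)
  have "comp_maximisers p e (\<chi> i. - w i) =
      {a \<in> weak_compositions e. (\<Sum>i\<in>UNIV. g i (a i)) = (\<Sum>i\<in>UNIV. g i (t\<^sub>0 i))}"
  proof -
    have "comp_maximisers p e (\<chi> i. - w i) =
        {a \<in> weak_compositions e. (\<chi> i. - w i) \<bullet> pow_vec p a = (\<chi> i. - w i) \<bullet> pow_vec p t\<^sub>0}"
    proof (rule maximisers_eq_level[OF _ t\<^sub>0 refl])
      show "(\<chi> i. - w i) \<bullet> pow_vec p a \<le> (\<chi> i. - w i) \<bullet> pow_vec p t\<^sub>0" if "a \<in> weak_compositions e" for a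
        using inner_eq[OF that] inner_eq[OF t\<^sub>0] excess[of a] excess_sum_nonneg[of a]
        by linarith
    qed
    then show ?thesis
      using inner_eq t\<^sub>0 by auto
  qed
  also have "\<dots> = {a \<in> weak_compositions e. \<forall>i. g i (a i) = g i (t\<^sub>0 i)}"
  proof -
    have "(\<Sum>i\<in>UNIV. g i (a i)) = (\<Sum>i\<in>UNIV. g i (t\<^sub>0 i)) \<longleftrightarrow> (\<forall>i. g i (a i) = g i (t\<^sub>0 i))" for a
      using excess[of a] sum_nonneg_eq_0_iff[of UNIV "\<lambda>i. g i (a i) - g i (t\<^sub>0 i)"] excess_nonneg
      by auto
    then show ?thesis
      by auto
  qed
  finally show ?thesis
    by (simp add: g_def)
qed

lemma comp_maximisers_exchange:
  assumes a: "a \<in> comp_maximisers p e c" and "i \<noteq> j" and "a j \<noteq> 0"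
  shows "c$i * (p - 1) * p ^ a i \<le> c$j * (p - 1) * p ^ (a j - 1)"
proof -
  define a' where "a' k = (if k = i then Suc (a i) else if k = j then a j - 1 else a k)" for k
  have "a' k + of_bool (k = j) = a k + of_bool (k = i)" for k
    using assms by (auto simp: a'_def)
  then have "sum a' UNIV + 1 = sum a UNIV + 1"
    using sum.distrib[of a' "\<lambda>k. of_bool (k = j)" UNIV] sum.distrib[of a "\<lambda>k. of_bool (k = i)" UNIV]
    by simp
  then have "a' \<in> weak_compositions e"
    using a by (simp add: maximisers_def weak_compositions_def)
  then have "c \<bullet> pow_vec p a' \<le> c \<bullet> pow_vec p a"
    using a by (simp add: maximisers_def)
  moreover have "c$k * p ^ a' k = c$k * p ^ a k
      + (if k = i then c$i * (p - 1) * p ^ a i else 0)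
      - (if k = j then c$j * (p - 1) * p ^ (a j - 1) else 0)" for k
    using assms by (cases "a j") (auto simp: a'_def algebra_simps)
  then have "c \<bullet> pow_vec p a' = c \<bullet> pow_vec p a + c$i * (p - 1) * p ^ a i - c$j * (p - 1) * p ^ (a j - 1)"
    by (simp add: inner_pow_vec sum.distrib sum_subtractf)
  ultimately show ?thesis
    by simp
qed

lemma comp_maximisers_neg:
  fixes c :: "real^'d::finite"
  assumes p: "p > 1" and neg: "\<And>i. c$i < 0"
  obtains b J where "comp_maximisers p e c = box_comps e b J"
proof -
  define w where "w i = - c$i" for i
  have w: "w i > 0" for i
    using neg by (simp add: w_def)
  have c_eq: "c = (\<chi> i. - w i)"
    by (simp add: w_def vec_eq_iff)
  obtain a where a: "a \<in> comp_maximisers p e c"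
    using maximisers_nonempty[OF finite_weak_compositions, of e "pow_vec p" c]
      pure_comp_weak_compositions by blast
  then have a_comp: "a \<in> weak_compositions e"
    by (simp add: maximisers_def)
  define lam where "lam = Min (range (\<lambda>i. w i * (p - 1) * p ^ a i))"
  have "lam \<in> range (\<lambda>i. w i * (p - 1) * p ^ a i)"
    unfolding lam_def by (rule Min_in) auto
  then obtain i\<^sub>0 where i\<^sub>0: "lam = w i\<^sub>0 * (p - 1) * p ^ a i\<^sub>0"
    by auto
  define f where "f i t = w i * p ^ t - lam * real t" for i t
  have incr: "f i (Suc t) - f i t < f i (Suc (Suc t)) - f i (Suc t)" for i t
    using pow_minus_linear_increasing_differences(2)[OF p w] by (simp add: f_def)
  have diff: "f i (Suc t) - f i t = w i * (p - 1) * p ^ t - lam" for i t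
    using pow_minus_linear_increasing_differences(1)[OF p w] by (simp add: f_def)
  have min: "f i (a i) \<le> f i t" for i t
  proof (rule increasing_differences_minimum[of "f i", OF incr])
    have "lam \<le> w i * (p - 1) * p ^ a i"
      unfolding lam_def by (rule Min_le) auto
    then show "f i (a i) \<le> f i (Suc (a i))"
      using diff[of i "a i"] by simp
    show "f i (a i) \<le> f i s" if "a i = Suc s" for s
    proof -
      have "w i * (p - 1) * p ^ s \<le> lam"
      proof (cases "i = i\<^sub>0")
        case True
        have "p ^ s \<le> p ^ a i"
          using p that by (simp add: power_increasing)
        then show ?thesis
          using True i\<^sub>0 w[of i] p by simp
      next
        case False
        then show ?thesis
          using comp_maximisers_exchange[OF a, of i\<^sub>0 i] that i\<^sub>0 by (simp add: w_def)
      qed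
      then show ?thesis
        using diff[of i s] that by simp
    qed
  qed
  define b where "b i = (LEAST t. f i t = f i (a i))" for i
  define J where "J = {i. f i (Suc (b i)) = f i (b i)}"
  have fb: "f i (b i) = f i (a i)" for i
    unfolding b_def by (rule LeastI[of _ "a i"]) simp
  have level: "f i t = f i (a i) \<longleftrightarrow> t = b i \<or> (i \<in> J \<and> t = Suc (b i))" for i t
  proof -
    have "f i t = f i (b i) \<longleftrightarrow> t = b i \<or> (t = Suc (b i) \<and> f i (Suc (b i)) = f i (b i))"
    proof (rule increasing_differences_minimisers[of "f i", OF incr])
      show "f i (b i) \<le> f i (Suc (b i))"
        using min fb by simp
      show "f i (b i) < f i s" if "b i = Suc s" for s
      proof -
        have "f i s \<noteq> f i (a i)"
          using not_less_Least[of s "\<lambda>t. f i t = f i (a i)"] that by (simp add: b_def)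
        then show ?thesis
          using min[of i s] fb[of i] by simp
      qed
    qed
    then show ?thesis
      using fb by (auto simp: J_def)
  qed
  have "comp_maximisers p e c = {a' \<in> weak_compositions e. \<forall>i. f i (a' i) = f i (a i)}"
    unfolding c_eq f_def by (rule comp_maximisers_Lagrange[OF a_comp]) (use min in \<open>simp add: f_def\<close>)
  also have "\<dots> = box_comps e b J"
    using level by (auto simp: box_comps_def)
  finally show ?thesis
    by (rule that)
qed

lemma box_comps_comp_maximisers:
  fixes b :: "'d::finite \<Rightarrow> nat"
  assumes p: "p > 1" and a\<^sub>0: "a\<^sub>0 \<in> box_comps e b J"
  obtains c where "comp_maximisers p e c = box_comps e b J"
proof -
  define \<theta> where "\<theta> i = (if i \<in> J then 1 else (p + 1) / 2)" for i
  define w where "w i = \<theta> i / p ^ b i" for i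
  define f where "f i t = w i * p ^ t - (p - 1) * real t" for i t
  have \<theta>: "1 \<le> \<theta> i" "\<theta> i < p" "\<theta> i = 1 \<longleftrightarrow> i \<in> J" for i
    using p by (auto simp: \<theta>_def)
  have w: "w i > 0" for i
    using \<theta>(1)[of i] p by (simp add: w_def)
  have w_pow: "w i * p ^ b i = \<theta> i" for i
    using p by (simp add: w_def)
  have incr: "f i (Suc t) - f i t < f i (Suc (Suc t)) - f i (Suc t)" for i t
    using pow_minus_linear_increasing_differences(2)[OF p w] by (simp add: f_def)
  have diff: "f i (Suc t) - f i t = w i * p ^ t * (p - 1) - (p - 1)" for i t
    using pow_minus_linear_increasing_differences(1)[OF p w] by (simp add: f_def algebra_simps)
  have right: "f i (Suc (b i)) - f i (b i) = (\<theta> i - 1) * (p - 1)" for i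
    using diff[of i "b i"] w_pow[of i] by (simp add: algebra_simps)
  have left: "f i (b i) < f i s" if "b i = Suc s" for i s
  proof -
    have "w i * p ^ s * p = \<theta> i"
      using w_pow[of i] that by (simp add: algebra_simps)
    then have "w i * p ^ s * p < 1 * p"
      using \<theta>(2)[of i] by simp
    then have "w i * p ^ s < 1"
      using p by (simp only: mult_less_cancel_right)
    then have "(w i * p ^ s - 1) * (p - 1) < 0"
      using p by (simp add: mult_neg_pos)
    then have "f i (Suc s) - f i s < 0"
      using diff[of i s] by (simp add: algebra_simps)
    then show ?thesis
      using that by simp
  qed
  have right_le: "f i (b i) \<le> f i (Suc (b i))" for i
  proof -
    have "0 \<le> (\<theta> i - 1) * (p - 1)"
      using \<theta>(1)[of i] p by simp
    then show ?thesis
      using right[of i] by linarith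
  qed
  have min: "f i (b i) \<le> f i t" for i t
    by (rule increasing_differences_minimum[of "f i", OF incr right_le]) (rule less_imp_le, rule left)
  have level: "f i t = f i (b i) \<longleftrightarrow> t = b i \<or> (i \<in> J \<and> t = Suc (b i))" for i t
  proof -
    have "f i (Suc (b i)) = f i (b i) \<longleftrightarrow> i \<in> J"
      using right[of i] \<theta>(3)[of i] p by auto
    moreover have "f i t = f i (b i) \<longleftrightarrow> t = b i \<or> (t = Suc (b i) \<and> f i (Suc (b i)) = f i (b i))"
      by (rule increasing_differences_minimisers[of "f i", OF incr right_le left])
    ultimately show ?thesis
      by blast
  qed
  have a\<^sub>0_level: "f i (a\<^sub>0 i) = f i (b i)" for i
    using a\<^sub>0 level by (auto simp: box_comps_def)
  have "comp_maximisers p e (\<chi> i. - w i) = {a \<in> weak_compositions e. \<forall>i. f i (a i) = f i (a\<^sub>0 i)}"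
    unfolding f_def
    by (rule comp_maximisers_Lagrange) (use a\<^sub>0 min a\<^sub>0_level in \<open>auto simp: box_comps_def f_def\<close>)
  also have "\<dots> = {a \<in> weak_compositions e. \<forall>i. f i (a i) = f i (b i)}"
    by (simp add: a\<^sub>0_level)
  also have "\<dots> = box_comps e b J"
    using level by (auto simp: box_comps_def)
  finally show ?thesis
    by (rule that)
qed

lemma weak_compositions_not_empty [simp]: "weak_compositions e \<noteq> {}"
  using pure_comp_weak_compositions by blast

lemma Max_range_vec_eqI:
  fixes c :: "real^'d::finite"
  assumes "\<And>i. c$i \<le> \<mu>" and "c$i\<^sub>0 = \<mu>"
  shows "Max (range (($) c)) = \<mu>"
  using assms by (intro Max_eqI) auto

lemma range_comp_maximisers:
  assumes p: "p > 1" and e: "e \<ge> 1"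
  shows "range (comp_maximisers p e :: real^'d::finite \<Rightarrow> _) =
    {pure_comp e ` I | I. I \<noteq> {}} \<union> {supported_comps e I | I. I \<noteq> {}} \<union>
    {box_comps e b J | b J. box_comps e b J \<noteq> {}}"
proof (intro equalityI subsetI)
  fix M
  assume "M \<in> range (comp_maximisers p e :: real^'d \<Rightarrow> _)"
  then obtain c :: "real^'d" where M: "M = comp_maximisers p e c"
    by blast
  define \<mu> where "\<mu> = Max (range (($) c))"
  have "\<mu> \<in> range (($) c)"
    unfolding \<mu>_def by (rule Max_in) auto
  then obtain i\<^sub>0 where i\<^sub>0: "c$i\<^sub>0 = \<mu>"
    by auto
  have c_le: "c$i \<le> \<mu>" for i
    by (simp add: \<mu>_def)
  consider "\<mu> > 0" | "\<mu> = 0" | "\<mu> < 0"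
    by linarith
  then show "M \<in> {pure_comp e ` I | I. I \<noteq> {}} \<union> {supported_comps e I | I. I \<noteq> {}} \<union>
      {box_comps e b J | b J. box_comps e b J \<noteq> {}}"
  proof cases
    case 1
    then have "M = pure_comp e ` {i. c$i = \<mu>}"
      using comp_maximisers_pos[OF p e \<mu>_def] M by simp
    then show ?thesis
      using i\<^sub>0 by blast
  next
    case 2
    then have "M = supported_comps e {i. c$i = 0}"
      using comp_maximisers_zero[OF p] \<mu>_def M by simp
    then show ?thesis
      using i\<^sub>0 2 by blast
  next
    case 3
    then obtain b J where "M = box_comps e b J"
      using comp_maximisers_neg[OF p, of c e] c_le M by (meson le_less_trans)
    moreover have "M \<noteq> {}"
      unfolding M by (rule maximisers_nonempty[OF finite_weak_compositions]) auto
    ultimately show ?thesis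
      by blast
  qed
next
  have pure: "pure_comp e ` I \<in> range (comp_maximisers p e :: real^'d \<Rightarrow> _)" if I: "I \<noteq> {}" for I :: "'d set"
  proof -
    obtain i\<^sub>0 where "i\<^sub>0 \<in> I"
      using I by blast
    let ?c = "(\<chi> i. if i \<in> I then 1 else 0) :: real^'d"
    have "Max (range (($) ?c)) = 1"
      by (rule Max_range_vec_eqI[of _ _ i\<^sub>0]) (use \<open>i\<^sub>0 \<in> I\<close> in auto)
    then have "comp_maximisers p e ?c = pure_comp e ` {i. ?c$i = 1}"
      using comp_maximisers_pos[OF p e, of 1 ?c] by simp
    also have "{i. ?c$i = 1} = I"
      by auto
    finally show ?thesis
      by (metis rangeI)
  qed
  have supported: "supported_comps e I \<in> range (comp_maximisers p e :: real^'d \<Rightarrow> _)" if I: "I \<noteq> {}" for I :: "'d set"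
  proof -
    obtain i\<^sub>0 where "i\<^sub>0 \<in> I"
      using I by blast
    let ?c = "(\<chi> i. if i \<in> I then 0 else -1) :: real^'d"
    have "Max (range (($) ?c)) = 0"
      by (rule Max_range_vec_eqI[of _ _ i\<^sub>0]) (use \<open>i\<^sub>0 \<in> I\<close> in auto)
    then have "comp_maximisers p e ?c = supported_comps e {i. ?c$i = 0}"
      by (rule comp_maximisers_zero[OF p])
    also have "{i. ?c$i = 0} = I"
      by auto
    finally show ?thesis
      by (metis rangeI)
  qed
  have box: "box_comps e b J \<in> range (comp_maximisers p e :: real^'d \<Rightarrow> _)" if nonempty: "box_comps e b J \<noteq> {}" for b J
  proof -
    obtain a\<^sub>0 where "a\<^sub>0 \<in> box_comps e b J"
      using nonempty by blast
    then obtain c where "comp_maximisers p e c = box_comps e b J"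
      using box_comps_comp_maximisers[OF p] by blast
    then show ?thesis
      by (metis rangeI)
  qed
  fix M :: "('d \<Rightarrow> nat) set"
  assume "M \<in> {pure_comp e ` I | I. I \<noteq> {}} \<union> {supported_comps e I | I. I \<noteq> {}} \<union>
      {box_comps e b J | b J. box_comps e b J \<noteq> {}}"
  then show "M \<in> range (comp_maximisers p e :: real^'d \<Rightarrow> _)"
    by (elim UnE CollectE exE conjE) (simp_all add: pure supported box)
qed

lemma aff_dim_le_dim_translates:
  fixes A :: "'a::euclidean_space set"
  assumes "x\<^sub>0 \<in> A" and "\<And>x. x \<in> A \<Longrightarrow> x - x\<^sub>0 \<in> V"
  shows "aff_dim A \<le> int (dim V)"
proof -
  have "aff_dim A = int (dim ((+) (- x\<^sub>0) ` A))"
    by (rule aff_dim_eq_dim) (simp add: hull_inc assms(1))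
  moreover have "dim ((+) (- x\<^sub>0) ` A) \<le> dim V"
    using assms(2) by (intro dim_subset) auto
  ultimately show ?thesis
    by simp
qed

lemma card_le_aff_dim:
  fixes A :: "(real^'n::finite) set" and f :: "real^'n \<Rightarrow> real^'n"
  assumes "x\<^sub>0 \<in> A" and "linear f"
    and "\<And>i. i \<in> K \<Longrightarrow> axis i 1 \<in> span (f ` (\<lambda>x. x - x\<^sub>0) ` A)"
  shows "int (card K) \<le> aff_dim A"
proof -
  let ?D = "(\<lambda>x. x - x\<^sub>0) ` A"
  have "independent ((\<lambda>i. axis i (1::real)) ` K)"
    by (rule independent_mono[OF independent_Basis]) (auto simp: axis_in_Basis_iff)
  moreover have "card ((\<lambda>i. axis i (1::real)) ` K) = card K"
    by (rule card_image) (auto simp: inj_on_def axis_eq_axis)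
  ultimately have "card K = dim ((\<lambda>i. axis i (1::real)) ` K)"
    by (simp add: dim_eq_card_independent)
  also have "\<dots> \<le> dim (span (f ` ?D))"
    using assms(3) by (intro dim_subset) auto
  also have "\<dots> \<le> dim ?D"
    using dim_image_le[OF assms(2)] by simp
  also have "\<dots> = aff_dim A"
  proof -
    have "aff_dim A = int (dim ((+) (- x\<^sub>0) ` A))"
      by (rule aff_dim_eq_dim) (simp add: hull_inc assms(1))
    moreover have "(+) (- x\<^sub>0) ` A = ?D"
      by auto
    ultimately show ?thesis
      by simp
  qed
  finally show ?thesis
    by simp
qed

lemma linear_diff_in_span_translates:
  assumes "linear f" and "x \<in> A" "y \<in> A"
  shows "f (x - y) \<in> span (f ` (\<lambda>z. z - x\<^sub>0) ` A)"
proof -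
  have "f (x - y) = f (x - x\<^sub>0) - f (y - x\<^sub>0)"
    using assms(1) by (simp add: linear_diff[symmetric])
  then show ?thesis
    using assms(2,3) by (simp add: span_diff span_base)
qed

lemma axis_in_span_scaled:
  fixes v :: "real^'n"
  assumes "c *\<^sub>R axis i 1 \<in> span S" and "c \<noteq> 0"
  shows "axis i 1 \<in> span S"
  using span_scale[OF assms(1), of "1 / c"] assms(2) by simp

lemma dim_coordinate_subspace: "dim {v::real^'n::finite. \<forall>i. i \<notin> J \<longrightarrow> v$i = 0} = card J"
proof -
  have "vec.dim {v::real^'n. \<forall>i. i \<notin> J \<longrightarrow> v$i = 0} = card J"
    by (rule dim_substandard_cart)
  then show ?thesis
    by (simp add: dim_vec_eq)
qed

lemma dim_coordinate_hyperplane_less: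
  assumes "j\<^sub>0 \<in> J" and "\<And>i. i \<in> J \<Longrightarrow> \<beta> i \<noteq> 0"
  shows "dim {v::real^'n::finite. (\<forall>i. i \<notin> J \<longrightarrow> v$i = 0) \<and> (\<Sum>i\<in>J. \<beta> i * v$i) = 0} < card J"
proof -
  let ?U = "{v::real^'n. \<forall>i. i \<notin> J \<longrightarrow> v$i = 0}"
  let ?V = "{v::real^'n. (\<forall>i. i \<notin> J \<longrightarrow> v$i = 0) \<and> (\<Sum>i\<in>J. \<beta> i * v$i) = 0}"
  have "subspace ?U"
    by (auto simp: subspace_def)
  moreover have "subspace ?V"
  proof -
    have "(\<Sum>i\<in>J. \<beta> i * (x$i + y$i)) = (\<Sum>i\<in>J. \<beta> i * x$i) + (\<Sum>i\<in>J. \<beta> i * y$i)"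
      and "(\<Sum>i\<in>J. \<beta> i * (c * x$i)) = c * (\<Sum>i\<in>J. \<beta> i * x$i)" for c x y
      by (simp_all add: distrib_left sum.distrib sum_distrib_left mult.left_commute)
    then show ?thesis
      by (auto simp: subspace_def)
  qed
  ultimately have spans: "span ?U = ?U" "span ?V = ?V"
    by (simp_all add: span_eq_iff)
  have "(\<Sum>i\<in>J. \<beta> i * axis j\<^sub>0 1 $ i) = \<beta> j\<^sub>0"
    using assms(1) by (simp add: axis_def if_distrib sum.delta cong: if_cong)
  then have "axis j\<^sub>0 1 \<in> ?U - ?V"
    using assms by (auto simp: axis_def)
  then have "span ?V \<subset> span ?U"
    unfolding spans by blast
  then have "dim ?V < dim ?U"
    by (rule dim_psubset)
  then show ?thesis
    using dim_coordinate_subspace[of J] by simp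
qed

definition zero_coord :: "'n \<Rightarrow> real^'n \<Rightarrow> real^'n" where
  "zero_coord j v = (\<chi> k. if k = j then 0 else v$k)"

lemma linear_zero_coord: "linear (zero_coord j)"
  by (auto simp: linear_iff zero_coord_def vec_eq_iff)

lemma aff_dim_pure_comps:
  fixes I :: "'d::finite set"
  assumes p: "p > 1" and e: "e \<ge> 1" and I: "I \<noteq> {}"
  shows "aff_dim (pow_vec p ` pure_comp e ` I) = int (card I) - 1"
proof -
  obtain j\<^sub>0 where j\<^sub>0: "j\<^sub>0 \<in> I"
    using I by blast
  let ?A = "pow_vec p ` pure_comp e ` I"
  let ?x\<^sub>0 = "pow_vec p (pure_comp e j\<^sub>0)"
  have pe: "p ^ e - 1 \<noteq> 0"
    using one_less_power[OF p, of e] e by simp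
  have diff_nth: "(pow_vec p (pure_comp e i) - pow_vec p (pure_comp e j)) $ k =
      (if k = i then p ^ e - 1 else 0) - (if k = j then p ^ e - 1 else 0)" for i j k
    by (simp add: pure_comp_def)
  have x\<^sub>0: "?x\<^sub>0 \<in> ?A"
    using j\<^sub>0 by blast
  let ?V = "{v::real^'d. (\<forall>i. i \<notin> I \<longrightarrow> v$i = 0) \<and> (\<Sum>i\<in>I. 1 * v$i) = 0}"
  have "x - ?x\<^sub>0 \<in> ?V" if x: "x \<in> ?A" for x
  proof -
    obtain i where i: "i \<in> I" "x = pow_vec p (pure_comp e i)"
      using x by blast
    then have "(\<Sum>k\<in>I. (x - ?x\<^sub>0)$k) =
        (\<Sum>k\<in>I. (if k = i then p ^ e - 1 else 0) - (if k = j\<^sub>0 then p ^ e - 1 else 0))"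
      by (simp only: diff_nth)
    also have "\<dots> = 0"
      using i j\<^sub>0 by (simp add: sum_subtractf)
    finally have "(\<Sum>k\<in>I. (x - ?x\<^sub>0)$k) = 0" .
    moreover have "(x - ?x\<^sub>0)$k = 0" if "k \<notin> I" for k
      using i j\<^sub>0 that diff_nth[of i j\<^sub>0 k] by auto
    ultimately show ?thesis
      by simp
  qed
  then have "aff_dim ?A \<le> int (dim ?V)"
    by (rule aff_dim_le_dim_translates[OF x\<^sub>0])
  moreover have "dim ?V < card I"
    by (rule dim_coordinate_hyperplane_less[OF j\<^sub>0]) simp
  moreover have "int (card (I - {j\<^sub>0})) \<le> aff_dim ?A"
  proof (rule card_le_aff_dim[OF x\<^sub>0 linear_zero_coord])
    fix i
    assume i: "i \<in> I - {j\<^sub>0}"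
    have "zero_coord j\<^sub>0 (pow_vec p (pure_comp e i) - ?x\<^sub>0) = (p ^ e - 1) *\<^sub>R axis i 1"
      using i by (auto simp: vec_eq_iff zero_coord_def pure_comp_def axis_def)
    moreover have "zero_coord j\<^sub>0 (pow_vec p (pure_comp e i) - ?x\<^sub>0) \<in> span (zero_coord j\<^sub>0 ` (\<lambda>x. x - ?x\<^sub>0) ` ?A)"
      using i x\<^sub>0 by (intro linear_diff_in_span_translates[OF linear_zero_coord]) auto
    ultimately show "axis i 1 \<in> span (zero_coord j\<^sub>0 ` (\<lambda>x. x - ?x\<^sub>0) ` ?A)"
      using pe axis_in_span_scaled by metis
  qed
  moreover have "card (I - {j\<^sub>0}) = card I - 1" and "card I \<ge> 1"
    using j\<^sub>0 by (auto simp: Suc_le_eq card_gt_0_iff)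
  ultimately show ?thesis
    by linarith
qed

lemma aff_dim_supported_comps:
  fixes I :: "'d::finite set"
  assumes p: "p > 1" and e: "e \<ge> 2" and I: "card I \<ge> 2"
  shows "aff_dim (pow_vec p ` supported_comps e I) = int (card I)"
proof -
  obtain T where "T \<subseteq> I" "card T = 2"
    using obtain_subset_with_card_n[OF I] by blast
  then obtain i\<^sub>0 i\<^sub>1 where ii: "i\<^sub>0 \<in> I" "i\<^sub>1 \<in> I" "i\<^sub>0 \<noteq> i\<^sub>1"
    by (auto simp: card_2_iff)
  let ?A = "pow_vec p ` supported_comps e I"
  let ?x\<^sub>0 = "pow_vec p (pure_comp e i\<^sub>0)"
  let ?S = "span (id ` (\<lambda>x. x - ?x\<^sub>0) ` ?A)"
  have pure: "pow_vec p (pure_comp e i) \<in> ?A" if "i \<in> I" for i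
    using that e by auto
  have diff_in_span: "pow_vec p a - ?x\<^sub>0 \<in> ?S" if "a \<in> supported_comps e I" for a
    using that by (intro span_base) auto
  have pure_supported: "pure_comp e i \<in> supported_comps e I" if "i \<in> I" for i
    using that e by simp
  have pe: "p ^ e - 1 > 0" and pe': "p ^ (e - 1) - 1 > 0"
    using p e by (simp_all add: one_less_power)
  have "x - ?x\<^sub>0 \<in> {v. \<forall>i. i \<notin> I \<longrightarrow> v$i = 0}" if x: "x \<in> ?A" for x
  proof -
    obtain a where a: "a \<in> supported_comps e I" "x = pow_vec p a"
      using x by blast
    then have "a i = 0" if "i \<notin> I" for i
      using that by (auto simp: supported_comps_def)
    then show ?thesis
      using ii a(2) by (auto simp: pure_comp_def)
  qed
  then have "aff_dim ?A \<le> int (dim {v::real^'d. \<forall>i. i \<notin> I \<longrightarrow> v$i = 0})"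
    by (rule aff_dim_le_dim_translates[OF pure[OF ii(1)]])
  then have "aff_dim ?A \<le> int (card I)"
    by (simp add: dim_coordinate_subspace)
  moreover have "int (card I) \<le> aff_dim ?A"
  proof (rule card_le_aff_dim[OF pure[OF ii(1)] linear_id])
    define q where "q = (\<lambda>k. if k = i\<^sub>0 then e - 1 else if k = i\<^sub>1 then 1 else 0)"
    have "sum q UNIV = (\<Sum>k\<in>UNIV. (if k = i\<^sub>0 then e - 1 else 0) + (if k = i\<^sub>1 then 1 else 0))"
      using ii by (intro sum.cong) (auto simp: q_def)
    also have "\<dots> = e"
      using e by (simp add: sum.distrib)
    finally have "q \<in> supported_comps e I"
      using ii by (auto simp: supported_comps_def weak_compositions_def q_def split: if_splits)
    then have "(p ^ e - 1) *\<^sub>R (pow_vec p q - ?x\<^sub>0) - (p - 1) *\<^sub>R (pow_vec p (pure_comp e i\<^sub>1) - ?x\<^sub>0) \<in> ?S"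
      using ii by (intro span_diff span_scale diff_in_span pure_supported)
    moreover have "(p ^ e - 1) *\<^sub>R (pow_vec p q - ?x\<^sub>0) - (p - 1) *\<^sub>R (pow_vec p (pure_comp e i\<^sub>1) - ?x\<^sub>0) =
        (- (p ^ e - 1) * (p - 1) * (p ^ (e - 1) - 1)) *\<^sub>R axis i\<^sub>0 1" (is "?l = ?r")
    proof -
      have pe_split: "p ^ e = p * p ^ (e - 1)"
        using e by (simp flip: power_Suc)
      have "?l $ k = ?r $ k" for k
        using ii pe_split
        by (cases "k = i\<^sub>0"; cases "k = i\<^sub>1") (simp_all add: q_def pure_comp_def axis_def algebra_simps)
      then show ?thesis
        by (simp add: vec_eq_iff)
    qed
    moreover have "- (p ^ e - 1) * (p - 1) * (p ^ (e - 1) - 1) \<noteq> 0"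
      using pe pe' p by simp
    ultimately have axis_i\<^sub>0: "axis i\<^sub>0 1 \<in> ?S"
      by (metis axis_in_span_scaled)
    fix i
    assume "i \<in> I"
    then have "axis i\<^sub>0 1 + (1 / (p ^ e - 1)) *\<^sub>R (pow_vec p (pure_comp e i) - ?x\<^sub>0) \<in> ?S"
      by (intro span_add axis_i\<^sub>0 span_scale diff_in_span pure_supported)
    moreover have "axis i\<^sub>0 1 + (1 / (p ^ e - 1)) *\<^sub>R (pow_vec p (pure_comp e i) - ?x\<^sub>0) = axis i 1"
      (is "?l = ?r")
    proof -
      have "?l $ k = ?r $ k" for k
        using pe by (cases "k = i\<^sub>0"; cases "k = i") (simp_all add: pure_comp_def axis_def divide_simps)
      then show ?thesis
        by (simp add: vec_eq_iff)
    qed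
    ultimately show "axis i 1 \<in> ?S"
      by simp
  qed
  ultimately show ?thesis
    by linarith
qed

definition bump :: "('d \<Rightarrow> nat) \<Rightarrow> 'd set \<Rightarrow> 'd \<Rightarrow> nat" where
  "bump b T = (\<lambda>i. b i + of_bool (i \<in> T))"

lemma sum_bump: "sum (bump b T) UNIV = sum b UNIV + card (T :: 'd::finite set)"
  by (simp add: bump_def sum.distrib)

lemma bump_eq_iff [simp]: "bump b T = bump b T' \<longleftrightarrow> T = T'"
  by (auto simp: bump_def fun_eq_iff)

lemma box_comps_eq_bump_image:
  "box_comps e b J = bump b ` {T. T \<subseteq> J \<and> sum b UNIV + card T = e}"
proof (intro equalityI subsetI)
  fix a
  assume a: "a \<in> box_comps e b J"
  let ?T = "{i. a i \<noteq> b i}"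
  have "a = bump b ?T"
    using a by (auto simp: box_comps_def bump_def fun_eq_iff)
  moreover have "?T \<subseteq> J"
    using a by (auto simp: box_comps_def)
  moreover have "sum b UNIV + card ?T = e"
    using a sum_bump[of b ?T] \<open>a = bump b ?T\<close> by (simp add: box_comps_def weak_compositions_def)
  ultimately show "a \<in> bump b ` {T. T \<subseteq> J \<and> sum b UNIV + card T = e}"
    by blast
next
  fix a
  assume "a \<in> bump b ` {T. T \<subseteq> J \<and> sum b UNIV + card T = e}"
  then obtain T where T: "T \<subseteq> J" "sum b UNIV + card T = e" "a = bump b T"
    by blast
  then have "a \<in> weak_compositions e"
    using sum_bump[of b T] by (simp add: weak_compositions_def)
  with T show "a \<in> box_comps e b J"
    by (auto simp: box_comps_def bump_def)
qed

lemma bump_in_box_comps: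
  "T \<subseteq> J \<Longrightarrow> sum b UNIV + card T = e \<Longrightarrow> bump b T \<in> box_comps e b J"
  by (auto simp: box_comps_eq_bump_image)

lemma box_comps_subsingleton:
  assumes "\<not> (sum b UNIV < e \<and> e < sum b UNIV + card J)"
    and "a \<in> box_comps e b J" "a' \<in> box_comps e b J"
  shows "a = a'"
proof -
  obtain T T' where T: "T \<subseteq> J" "sum b UNIV + card T = e" "a = bump b T"
    and T': "T' \<subseteq> J" "sum b UNIV + card T' = e" "a' = bump b T'"
    using assms(2,3) by (auto simp: box_comps_eq_bump_image)
  have "card T \<le> card J" "card T' \<le> card J"
    using T(1) T'(1) by (auto intro: card_mono)
  then have "T = {} \<and> T' = {} \<or> T = J \<and> T' = J"
    using assms(1) T T' card_subset_eq[OF finite T(1)] card_subset_eq[OF finite T'(1)]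
    by (cases "card T = 0") auto
  then show ?thesis
    using T(3) T'(3) by auto
qed

lemma proper_box_comps_witnesses:
  assumes "sum b UNIV < e" "e < sum b UNIV + card J" and "i \<in> J"
  shows "\<exists>a \<in> box_comps e b J. a i = b i" and "\<exists>a \<in> box_comps e b J. a i = Suc (b i)"
proof -
  define r where "r = e - sum b UNIV"
  have r: "1 \<le> r" "r \<le> card (J - {i})"
    using assms by (auto simp: r_def)
  obtain T where T: "T \<subseteq> J - {i}" "card T = r"
    using obtain_subset_with_card_n[OF r(2)] by blast
  then have "bump b T \<in> box_comps e b J"
    using assms by (intro bump_in_box_comps) (auto simp: r_def)
  moreover have "bump b T i = b i"
    using T by (auto simp: bump_def)
  ultimately show "\<exists>a \<in> box_comps e b J. a i = b i"
    by blast
  have "r - 1 \<le> card (J - {i})"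
    using r by linarith
  then obtain T\<^sub>0 where T\<^sub>0: "T\<^sub>0 \<subseteq> J - {i}" "card T\<^sub>0 = r - 1"
    by (rule obtain_subset_with_card_n)
  then have "card (insert i T\<^sub>0) = r"
    using r(1) by (subst card_insert_disjoint) (auto intro: finite_subset)
  then have "bump b (insert i T\<^sub>0) \<in> box_comps e b J"
    using assms T\<^sub>0 by (intro bump_in_box_comps) (auto simp: r_def)
  moreover have "bump b (insert i T\<^sub>0) i = Suc (b i)"
    by (simp add: bump_def)
  ultimately show "\<exists>a \<in> box_comps e b J. a i = Suc (b i)"
    by blast
qed

lemma proper_box_comps_two_elements:
  assumes "sum b UNIV < e" "e < sum b UNIV + card J"
  obtains a a' where "a \<in> box_comps e b J" "a' \<in> box_comps e b J" "a \<noteq> a'"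
proof -
  obtain i where "i \<in> J"
    using assms by fastforce
  then show ?thesis
    using proper_box_comps_witnesses[OF assms] that by (metis n_not_Suc_n)
qed

lemma box_comps_at_most_one_pure:
  assumes "e \<ge> 2" and "pure_comp e i \<in> box_comps e b J" "pure_comp e j \<in> box_comps e b J"
  shows "i = j"
proof (rule ccontr)
  assume "i \<noteq> j"
  then have "b i = 0"
    using assms(3) by (auto simp: box_comps_def pure_comp_def dest: spec[of _ i])
  then show False
    using assms(1,2) by (auto simp: box_comps_def pure_comp_def dest: spec[of _ i])
qed

lemma proper_box_comps_inject:
  assumes "sum b UNIV < e" "e < sum b UNIV + card J"
    and "sum b' UNIV < e" "e < sum b' UNIV + card J'"
    and eq: "box_comps e b J = box_comps e b' J'"
  shows "b = b'" and "J = J'"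
proof -
  have outside: "a i = c i" if "a \<in> box_comps e c K" "i \<notin> K" for a c i K
    using that by (auto simp: box_comps_def)
  have near: "a i = c i \<or> a i = Suc (c i)" if "a \<in> box_comps e c K" for a c i K
    using that by (auto simp: box_comps_def)
  have subset: "K \<subseteq> K'"
    if proper: "sum c UNIV < e" "e < sum c UNIV + card K"
      and same: "box_comps e c K = box_comps e c' K'" for c c' K K'
  proof
    fix i
    assume "i \<in> K"
    then obtain a a' where "a \<in> box_comps e c K" "a i = c i" "a' \<in> box_comps e c K" "a' i = Suc (c i)"
      using proper_box_comps_witnesses[OF proper] by blast
    then show "i \<in> K'"
      using outside[of a c' K' i] outside[of a' c' K' i] same by auto
  qed
  show J: "J = J'"
    using subset[OF assms(1,2) eq] subset[OF assms(3,4) eq[symmetric]] by blast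
  show "b = b'"
  proof
    fix i
    show "b i = b' i"
    proof (cases "i \<in> J")
      case True
      obtain a where a: "a \<in> box_comps e b J" "a i = b i"
        using proper_box_comps_witnesses(1)[OF assms(1,2) True] by blast
      obtain a' where a': "a' \<in> box_comps e b' J'" "a' i = b' i"
        using proper_box_comps_witnesses(1)[OF assms(3,4)] True J by blast
      have "b i = b' i \<or> b i = Suc (b' i)"
        using near[of a b' J' i] a eq by simp
      moreover have "b' i = b i \<or> b' i = Suc (b i)"
        using near[of a' b J i] a' eq by simp
      ultimately show ?thesis
        by linarith
    next
      case False
      obtain a where a: "a \<in> box_comps e b J"
        using proper_box_comps_two_elements[OF assms(1,2)] by blast
      then have "a i = b i"
        using outside False by blast
      moreover have "a i = b' i"
        using outside[of a b' J' i] a False J eq by simp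
      ultimately show ?thesis
        by simp
    qed
  qed
qed

lemma weighted_sum_pow_bump:
  fixes p :: real and S J :: "'d::finite set"
  assumes "p > 0" and "S \<subseteq> J"
  shows "(\<Sum>i\<in>J. p ^ bump b S i / p ^ b i) = card J + (p - 1) * card S"
proof -
  have "(\<Sum>i\<in>J. p ^ bump b S i / p ^ b i) = (\<Sum>i\<in>J. 1 + (p - 1) * of_bool (i \<in> S))"
    using assms(1) by (intro sum.cong) (auto simp: bump_def)
  also have "\<dots> = card J + (p - 1) * (\<Sum>i\<in>J. of_bool (i \<in> S))"
    by (simp add: sum.distrib sum_distrib_left)
  also have "(\<Sum>i\<in>J. of_bool (i \<in> S)) = real (card S)"
    using sum_of_bool_eq[of J "\<lambda>i. i \<in> S"] assms(2) by (simp add: Int_absorb1)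
  finally show ?thesis .
qed

lemma aff_dim_box_comps:
  fixes b :: "'d::finite \<Rightarrow> nat"
  assumes p: "p > 1" and proper: "sum b UNIV < e" "e < sum b UNIV + card J"
  shows "aff_dim (pow_vec p ` box_comps e b J) = int (card J) - 1"
proof -
  define r where "r = e - sum b UNIV"
  have r: "1 \<le> r" "r < card J"
    using proper by (auto simp: r_def)
  obtain j\<^sub>0 where j\<^sub>0: "j\<^sub>0 \<in> J"
    using r by fastforce
  obtain T where T: "T \<subseteq> J" "card T = r"
    using obtain_subset_with_card_n[of r J] r by auto
  let ?A = "pow_vec p ` box_comps e b J"
  let ?x\<^sub>0 = "pow_vec p (bump b T)"
  have x\<^sub>0: "?x\<^sub>0 \<in> ?A"
    using T proper by (auto intro!: bump_in_box_comps simp: r_def)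
  let ?V = "{v::real^'d. (\<forall>i. i \<notin> J \<longrightarrow> v$i = 0) \<and> (\<Sum>i\<in>J. (1 / p ^ b i) * v$i) = 0}"
  have "x - ?x\<^sub>0 \<in> ?V" if x: "x \<in> ?A" for x
  proof -
    obtain S where S: "S \<subseteq> J" "card S = r" "x = pow_vec p (bump b S)"
      using x proper by (auto simp: box_comps_eq_bump_image r_def)
    have "(\<Sum>i\<in>J. (1 / p ^ b i) * (x - ?x\<^sub>0)$i) = (\<Sum>i\<in>J. p ^ bump b S i / p ^ b i) - (\<Sum>i\<in>J. p ^ bump b T i / p ^ b i)"
      by (simp add: S(3) sum_subtractf right_diff_distrib)
    also have "\<dots> = 0"
      using weighted_sum_pow_bump[of p S J b] weighted_sum_pow_bump[of p T J b] p S T by simp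
    finally show ?thesis
      using S T by (auto simp: bump_def)
  qed
  then have "aff_dim ?A \<le> int (dim ?V)"
    by (rule aff_dim_le_dim_translates[OF x\<^sub>0])
  moreover have "dim ?V < card J"
    using p by (intro dim_coordinate_hyperplane_less[OF j\<^sub>0]) simp
  moreover have "int (card (J - {j\<^sub>0})) \<le> aff_dim ?A"
  proof (rule card_le_aff_dim[OF x\<^sub>0 linear_zero_coord])
    fix i
    assume i: "i \<in> J - {j\<^sub>0}"
    have "r - 1 \<le> card (J - {i, j\<^sub>0})"
      using i j\<^sub>0 r by (simp add: card_Diff_subset)
    then obtain T\<^sub>0 where T\<^sub>0: "T\<^sub>0 \<subseteq> J - {i, j\<^sub>0}" "card T\<^sub>0 = r - 1"
      by (rule obtain_subset_with_card_n)
    have "finite T\<^sub>0" "i \<notin> T\<^sub>0" "j\<^sub>0 \<notin> T\<^sub>0"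
      using T\<^sub>0(1) by auto
    then have card_insert: "card (insert k T\<^sub>0) = r" if "k \<in> {i, j\<^sub>0}" for k
      using that T\<^sub>0(2) r(1) by auto
    have in_box: "pow_vec p (bump b (insert k T\<^sub>0)) \<in> ?A" if "k \<in> {i, j\<^sub>0}" for k
      using that i j\<^sub>0 T\<^sub>0(1) card_insert[OF that] proper
      by (auto intro!: imageI bump_in_box_comps simp: r_def)
    have "zero_coord j\<^sub>0 (pow_vec p (bump b (insert i T\<^sub>0)) - pow_vec p (bump b (insert j\<^sub>0 T\<^sub>0)))
        = (p ^ b i * (p - 1)) *\<^sub>R axis i 1" (is "?l = ?r")
    proof -
      have "?l $ k = ?r $ k" for k
        using i \<open>i \<notin> T\<^sub>0\<close>
        by (cases "k = j\<^sub>0"; cases "k = i") (simp_all add: zero_coord_def bump_def axis_def algebra_simps)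
      then show ?thesis
        by (simp add: vec_eq_iff)
    qed
    moreover have "?l \<in> span (zero_coord j\<^sub>0 ` (\<lambda>x. x - ?x\<^sub>0) ` ?A)"
      using in_box by (intro linear_diff_in_span_translates[OF linear_zero_coord]) auto
    moreover have "p ^ b i * (p - 1) \<noteq> 0"
      using p by simp
    ultimately show "axis i 1 \<in> span (zero_coord j\<^sub>0 ` (\<lambda>x. x - ?x\<^sub>0) ` ?A)"
      by (metis axis_in_span_scaled)
  qed
  moreover have "card (J - {j\<^sub>0}) = card J - 1"
    using j\<^sub>0 by simp
  ultimately show ?thesis
    using r by linarith
qed

lemma supported_comps_singleton: "supported_comps e {i} = {pure_comp e i}"
  by (auto simp: supported_comps_def intro: weak_composition_eq_pure_comp)
    (auto simp: pure_comp_def weak_compositions_def split: if_splits)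

lemma aff_dim_image_subsingleton:
  assumes "M \<noteq> {}" and "\<And>a a'. a \<in> M \<Longrightarrow> a' \<in> M \<Longrightarrow> a = a'"
  shows "aff_dim (f ` M) = 0"
proof -
  obtain a where "M = {a}"
    using assms by blast
  then show ?thesis
    by simp
qed

lemma supported_comps_non_pure:
  assumes "e \<ge> 2" and "2 \<le> card I"
  obtains a where "a \<in> supported_comps e I" "a \<notin> range (pure_comp e)"
proof -
  obtain T where "T \<subseteq> I" "card T = 2"
    using obtain_subset_with_card_n[OF assms(2)] by blast
  then obtain i\<^sub>0 i\<^sub>1 where ii: "i\<^sub>0 \<in> I" "i\<^sub>1 \<in> I" "i\<^sub>0 \<noteq> i\<^sub>1"
    by (auto simp: card_2_iff)
  define q where "q = (\<lambda>k. if k = i\<^sub>0 then e - 1 else if k = i\<^sub>1 then 1 else 0)"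
  have "sum q UNIV = (\<Sum>k\<in>UNIV. (if k = i\<^sub>0 then e - 1 else 0) + (if k = i\<^sub>1 then 1 else 0))"
    using ii by (intro sum.cong) (auto simp: q_def)
  also have "\<dots> = e"
    using assms(1) by (simp add: sum.distrib)
  finally have "q \<in> supported_comps e I"
    using ii by (auto simp: supported_comps_def weak_compositions_def q_def split: if_splits)
  moreover have "q \<notin> range (pure_comp e)"
    using ii assms(1) by (auto simp: q_def pure_comp_def fun_eq_iff split: if_splits)
  ultimately show ?thesis
    by (rule that)
qed

lemma proper_box_comps_non_pure:
  assumes "e \<ge> 2" and "sum b UNIV < e" "e < sum b UNIV + card J"
  obtains a where "a \<in> box_comps e b J" "a \<notin> range (pure_comp e)"
proof -
  obtain a a' where "a \<in> box_comps e b J" "a' \<in> box_comps e b J" "a \<noteq> a'"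
    using proper_box_comps_two_elements[OF assms(2,3)] by blast
  then show ?thesis
    using box_comps_at_most_one_pure[OF assms(1)] that by blast
qed

definition pure_faces :: "nat \<Rightarrow> nat \<Rightarrow> ('d::finite \<Rightarrow> nat) set set" where
  "pure_faces e k = {pure_comp e ` I | I. card I = Suc k}"

definition supported_faces :: "nat \<Rightarrow> nat \<Rightarrow> ('d::finite \<Rightarrow> nat) set set" where
  "supported_faces e k = {supported_comps e I | I. 2 \<le> card I \<and> card I = k}"

definition box_bases :: "nat \<Rightarrow> nat \<Rightarrow> ('d::finite \<Rightarrow> nat) set" where
  "box_bases e k = {b. sum b UNIV < e \<and> e \<le> sum b UNIV + k}"

definition box_faces :: "nat \<Rightarrow> nat \<Rightarrow> ('d::finite \<Rightarrow> nat) set set" where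
  "box_faces e k = {box_comps e b J | b J. b \<in> box_bases e k \<and> card J = Suc k}"

lemma comp_maximisers_of_dim:
  assumes p: "p > 1" and e: "e \<ge> 2" and k: "k \<ge> 1"
  shows "{M \<in> range (comp_maximisers p e :: real^'d::finite \<Rightarrow> _). aff_dim (pow_vec p ` M) = int k} =
    pure_faces e k \<union> supported_faces e k \<union> box_faces e k"
proof -
  have e1: "e \<ge> 1"
    using e by simp
  have pure: "I \<noteq> {} \<and> aff_dim (pow_vec p ` pure_comp e ` I) = int k \<longleftrightarrow> card I = Suc k"
    for I :: "'d set"
  proof (cases "I = {}")
    case False
    then show ?thesis
      using aff_dim_pure_comps[OF p e1 False] by auto
  qed simp
  have supported:
    "I \<noteq> {} \<and> aff_dim (pow_vec p ` supported_comps e I) = int k \<longleftrightarrow> 2 \<le> card I \<and> card I = k"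
    for I :: "'d set"
  proof (cases "2 \<le> card I")
    case True
    then show ?thesis
      using aff_dim_supported_comps[OF p e True] by auto
  next
    case False
    show ?thesis
    proof (cases "I = {}")
      case False
      then have "card I = 1"
        using \<open>\<not> 2 \<le> card I\<close> card_gt_0_iff[of I] by simp
      then obtain i where "I = {i}"
        by (rule card_1_singletonE)
      then show ?thesis
        using k by (simp add: supported_comps_singleton)
    qed (use False in simp)
  qed
  have box: "box_comps e b J \<noteq> {} \<and> aff_dim (pow_vec p ` box_comps e b J) = int k \<longleftrightarrow>
      b \<in> box_bases e k \<and> card J = Suc k" for b and J :: "'d set"
  proof (cases "sum b UNIV < e \<and> e < sum b UNIV + card J")
    case True
    then have "aff_dim (pow_vec p ` box_comps e b J) = int (card J) - 1"
      by (intro aff_dim_box_comps[OF p]) auto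
    moreover have "box_comps e b J \<noteq> {}"
      using True proper_box_comps_two_elements[of b e J] by blast
    ultimately show ?thesis
      using True by (auto simp: box_bases_def)
  next
    case False
    then have "box_comps e b J = {} \<or> aff_dim (pow_vec p ` box_comps e b J) = 0"
      using box_comps_subsingleton aff_dim_image_subsingleton by metis
    then show ?thesis
      using False k by (auto simp: box_bases_def)
  qed
  have "{M \<in> range (comp_maximisers p e :: real^'d \<Rightarrow> _). aff_dim (pow_vec p ` M) = int k} =
      {pure_comp e ` I | I. I \<noteq> {} \<and> aff_dim (pow_vec p ` pure_comp e ` I) = int k} \<union>
      {supported_comps e I | I. I \<noteq> {} \<and> aff_dim (pow_vec p ` supported_comps e I) = int k} \<union>
      {box_comps e b J | b J. box_comps e b J \<noteq> {} \<and> aff_dim (pow_vec p ` box_comps e b J) = int k}"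
    unfolding range_comp_maximisers[OF p e1] by blast
  also have "\<dots> = pure_faces e k \<union> supported_faces e k \<union> box_faces e k"
    unfolding pure_faces_def supported_faces_def box_faces_def by (simp only: pure supported box)
  finally show ?thesis .
qed

lemma card_sets_of_card: "card {I :: 'd::finite set. card I = n} = CARD('d) choose n"
  using n_subsets[of "UNIV :: 'd set" n] by simp

lemma card_pure_faces:
  assumes "e \<ge> 1"
  shows "card (pure_faces e k :: ('d::finite \<Rightarrow> nat) set set) = CARD('d) choose Suc k"
proof -
  have "inj (pure_comp e :: 'd \<Rightarrow> _)"
    using assms by (auto intro: injI)
  then have "inj_on (\<lambda>I. pure_comp e ` I) {I :: 'd set. card I = Suc k}"
    by (auto simp: inj_on_def inj_image_eq_iff)
  then show ?thesis
    by (simp add: pure_faces_def setcompr_eq_image card_image card_sets_of_card)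
qed

lemma card_supported_faces:
  assumes "e \<ge> 1"
  shows "card (supported_faces e k :: ('d::finite \<Rightarrow> nat) set set) =
    (if 2 \<le> k then CARD('d) choose k else 0)"
proof -
  have "inj_on (supported_comps e) {I :: 'd set. 2 \<le> card I \<and> card I = k}"
    using assms by (intro inj_onI) (metis pure_comp_in_supported_comps subsetI subset_antisym)
  then have "card (supported_faces e k :: ('d \<Rightarrow> nat) set set) = card {I :: 'd set. 2 \<le> card I \<and> card I = k}"
    by (simp add: supported_faces_def setcompr_eq_image card_image)
  moreover have "{I :: 'd set. 2 \<le> card I \<and> card I = k} = (if 2 \<le> k then {I. card I = k} else {})"
    by auto
  ultimately show ?thesis
    by (simp add: card_sets_of_card)
qed

lemma finite_sum_less: "finite {b :: 'd::finite \<Rightarrow> nat. sum b UNIV < n}"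
proof (rule finite_subset)
  show "{b :: 'd \<Rightarrow> nat. sum b UNIV < n} \<subseteq> (\<Union>m<n. weak_compositions m)"
    by (auto simp: weak_compositions_def)
qed (simp add: finite_weak_compositions)

lemma card_sum_less:
  "card {b :: 'd::finite \<Rightarrow> nat. sum b UNIV < n} = (n + CARD('d) - 1) choose CARD('d)"
proof (induction n)
  case (Suc n)
  have split: "{b :: 'd \<Rightarrow> nat. sum b UNIV < Suc n} = {b. sum b UNIV < n} \<union> weak_compositions n"
    by (auto simp: weak_compositions_def)
  have "card {b :: 'd \<Rightarrow> nat. sum b UNIV < Suc n} =
      card {b :: 'd \<Rightarrow> nat. sum b UNIV < n} + card (weak_compositions n :: ('d \<Rightarrow> nat) set)"
    unfolding split
    by (intro card_Un_disjoint finite_sum_less finite_weak_compositions) (auto simp: weak_compositions_def)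
  moreover obtain d' where "CARD('d) = Suc d'"
    using zero_less_card_finite[where 'a='d] gr0_implies_Suc by blast
  ultimately show ?case
    using Suc.IH by (simp add: card_weak_compositions)
qed simp

lemma card_box_bases:
  "int (card (box_bases e k :: ('d::finite \<Rightarrow> nat) set)) =
    int ((e + CARD('d) - 1) choose CARD('d)) - int ((e + CARD('d) - 1 - k) choose CARD('d))"
proof -
  let ?d = "CARD('d)"
  have "box_bases e k = {b :: 'd \<Rightarrow> nat. sum b UNIV < e} - {b. sum b UNIV < e - k}"
    by (auto simp: box_bases_def)
  moreover have sub: "{b :: 'd \<Rightarrow> nat. sum b UNIV < e - k} \<subseteq> {b. sum b UNIV < e}"
    by auto
  ultimately have "card (box_bases e k :: ('d \<Rightarrow> nat) set) =
      card {b :: 'd \<Rightarrow> nat. sum b UNIV < e} - card {b :: 'd \<Rightarrow> nat. sum b UNIV < e - k}"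
    using card_Diff_subset[OF finite_sum_less sub] by simp
  moreover have "card {b :: 'd \<Rightarrow> nat. sum b UNIV < e - k} \<le> card {b :: 'd \<Rightarrow> nat. sum b UNIV < e}"
    using sub by (intro card_mono finite_sum_less)
  moreover have "(e - k + ?d - 1) choose ?d = (e + ?d - 1 - k) choose ?d"
  proof (cases "k \<le> e")
    case False
    have "0 < ?d"
      by simp
    then have "e - k + ?d - 1 < ?d" "e + ?d - 1 - k < ?d"
      using False by linarith+
    then show ?thesis
      by (simp add: binomial_eq_0)
  qed simp
  ultimately show ?thesis
    by (simp add: card_sum_less of_nat_diff)
qed

lemma box_bases_one: "e \<ge> 1 \<Longrightarrow> box_bases e 1 = weak_compositions (e - 1)"
  by (auto simp: box_bases_def weak_compositions_def)

lemma card_box_faces: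
  "card (box_faces e k :: ('d::finite \<Rightarrow> nat) set set) =
    card (box_bases e k :: ('d \<Rightarrow> nat) set) * (CARD('d) choose Suc k)"
proof -
  have "box_faces e k = (\<lambda>(b, J). box_comps e b J) ` (box_bases e k \<times> {J :: 'd set. card J = Suc k})"
    by (auto simp: box_faces_def)
  moreover have "inj_on (\<lambda>(b, J). box_comps e b J) (box_bases e k \<times> {J :: 'd set. card J = Suc k})"
    by (intro inj_onI) (auto simp: box_bases_def dest: proper_box_comps_inject[rotated 4])
  ultimately show ?thesis
    by (simp add: card_image card_cartesian_product card_sets_of_card)
qed

lemma faces_disjoint:
  assumes e: "e \<ge> 2"
  shows "pure_faces e k \<inter> supported_faces e k = {}"
    and "pure_faces e k \<inter> box_faces e k = {}"
    and "supported_faces e k \<inter> box_faces e k = {}"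
proof -
  have pure_only: "M \<subseteq> range (pure_comp e)" if "M \<in> pure_faces e k" for M
    using that by (auto simp: pure_faces_def)
  show "pure_faces e k \<inter> supported_faces e k = {}"
  proof (intro equals0I)
    fix M
    assume M: "M \<in> pure_faces e k \<inter> supported_faces e k"
    then obtain I where I: "M = supported_comps e I" "2 \<le> card I"
      by (auto simp: supported_faces_def)
    obtain a where "a \<in> supported_comps e I" "a \<notin> range (pure_comp e)"
      by (rule supported_comps_non_pure[OF e I(2)])
    then show False
      using pure_only M I(1) by blast
  qed
  show "pure_faces e k \<inter> box_faces e k = {}"
  proof (intro equals0I)
    fix M
    assume M: "M \<in> pure_faces e k \<inter> box_faces e k"
    then obtain b J where B: "M = box_comps e b J" "sum b UNIV < e" "e < sum b UNIV + card J"
      by (auto simp: box_faces_def box_bases_def)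
    obtain a where "a \<in> box_comps e b J" "a \<notin> range (pure_comp e)"
      by (rule proper_box_comps_non_pure[OF e B(2,3)])
    then show False
      using pure_only M B(1) by blast
  qed
  show "supported_faces e k \<inter> box_faces e k = {}"
  proof (intro equals0I)
    fix M
    assume M: "M \<in> supported_faces e k \<inter> box_faces e k"
    then obtain I where I: "M = supported_comps e I" "2 \<le> card I"
      by (auto simp: supported_faces_def)
    obtain b J where B: "M = box_comps e b J"
      using M by (auto simp: box_faces_def)
    obtain T where "T \<subseteq> I" "card T = 2"
      using obtain_subset_with_card_n[OF I(2)] by blast
    then obtain i j where ij: "i \<in> I" "j \<in> I" "i \<noteq> j"
      by (auto simp: card_2_iff)
    have "pure_comp e i \<in> box_comps e b J" "pure_comp e j \<in> box_comps e b J"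
      using ij e by (simp_all flip: B add: I(1))
    then show False
      using box_comps_at_most_one_pure[OF e] ij(3) by blast
  qed
qed

lemma comp_maximisers_singleton:
  assumes p: "p > 1" and a: "a \<in> weak_compositions e"
  shows "\<exists>c. comp_maximisers p e c = {a}"
proof -
  have "box_comps e a {} = {a}"
    using a by (auto simp: box_comps_def)
  moreover obtain c where "comp_maximisers p e c = box_comps e a {}"
    using box_comps_comp_maximisers[OF p] calculation by blast
  ultimately show ?thesis
    by auto
qed

lemma num_faces_pow_polytope:
  assumes p: "p > 1" and e: "e \<ge> 2" and k: "k \<ge> 1"
  shows "num_faces k (convex hull (pow_vec p ` weak_compositions e) :: (real^'d::finite) set) =
    (CARD('d) choose Suc k) + (if 2 \<le> k then CARD('d) choose k else 0) +
    card (box_bases e k :: ('d \<Rightarrow> nat) set) * (CARD('d) choose Suc k)"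
proof -
  have "num_faces k (convex hull (pow_vec p ` weak_compositions e) :: (real^'d) set) =
      card {M \<in> range (comp_maximisers p e :: real^'d \<Rightarrow> _). aff_dim (pow_vec p ` M) = int k}"
    by (rule num_faces_convex_hull_image[OF finite_weak_compositions
          inj_on_subset[OF inj_pow_vec[OF p] subset_UNIV] comp_maximisers_singleton[OF p]])
  also have "\<dots> = card (pure_faces e k \<union> supported_faces e k \<union> box_faces e k :: ('d \<Rightarrow> nat) set set)"
    by (simp only: comp_maximisers_of_dim[OF p e k])
  also have "\<dots> = card (pure_faces e k :: ('d \<Rightarrow> nat) set set) + card (supported_faces e k :: ('d \<Rightarrow> nat) set set)
      + card (box_faces e k :: ('d \<Rightarrow> nat) set set)"
  proof -
    have "finite (Pow (weak_compositions e :: ('d \<Rightarrow> nat) set))"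
      by (simp add: finite_weak_compositions)
    moreover have "pure_faces e k \<subseteq> Pow (weak_compositions e)" "supported_faces e k \<subseteq> Pow (weak_compositions e)"
      "box_faces e k \<subseteq> Pow (weak_compositions e)"
      by (auto simp: pure_faces_def supported_faces_def supported_comps_def box_faces_def box_comps_def)
    ultimately have fin: "finite (pure_faces e k :: ('d \<Rightarrow> nat) set set)"
      "finite (supported_faces e k :: ('d \<Rightarrow> nat) set set)" "finite (box_faces e k :: ('d \<Rightarrow> nat) set set)"
      by (auto intro: finite_subset)
    have "card (pure_faces e k \<union> supported_faces e k \<union> box_faces e k :: ('d \<Rightarrow> nat) set set) =
        card (pure_faces e k \<union> supported_faces e k :: ('d \<Rightarrow> nat) set set) + card (box_faces e k :: ('d \<Rightarrow> nat) set set)"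
      using fin faces_disjoint[OF e, of k] by (intro card_Un_disjoint) auto
    also have "card (pure_faces e k \<union> supported_faces e k :: ('d \<Rightarrow> nat) set set) =
        card (pure_faces e k :: ('d \<Rightarrow> nat) set set) + card (supported_faces e k :: ('d \<Rightarrow> nat) set set)"
      using fin faces_disjoint(1)[OF e, of k] by (intro card_Un_disjoint) auto
    finally show ?thesis .
  qed
  finally show ?thesis
    using e by (simp add: card_pure_faces card_supported_faces card_box_faces)
qed

lemma num_vertices_pow_polytope:
  assumes p: "p > 1"
  shows "num_faces 0 (convex hull (pow_vec p ` weak_compositions e) :: (real^'d::finite) set) =
    (e + CARD('d) - 1) choose (CARD('d) - 1)"
proof -
  have "num_faces 0 (convex hull (pow_vec p ` weak_compositions e) :: (real^'d) set) =
      card (weak_compositions e :: ('d \<Rightarrow> nat) set)"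
    by (rule num_vertices_convex_hull_image[OF finite_weak_compositions
          inj_on_subset[OF inj_pow_vec[OF p] subset_UNIV] comp_maximisers_singleton[OF p]])
  then show ?thesis
    by (simp add: card_weak_compositions)
qed

theorem theorem1p3:
  fixes p e d :: nat
  assumes "prime p" and "e \<ge> 2" and "d = CARD('d::finite)" and "d \<ge> 2"
  defines "P \<equiv> (factorisation_polytope (p ^ e) :: (real ^ 'd) set)"
  shows "num_faces 0 P = (e + d - 1) choose (d - 1)
    \<and> num_faces 1 P = (d choose 2) + (d choose 2) * ((e + d - 2) choose (d - 1))
    \<and> (\<forall>k. 2 \<le> k \<and> k < d \<longrightarrow>
           int (num_faces k P) =
             int ((d + 1) choose (k + 1)) + int (d choose (k + 1)) * int ((e + d - 1) choose d)
             - int (d choose (k + 1)) * int ((e + d - 1 - k) choose d))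
    \<and> num_faces d P = 1"
proof -
  have p: "real p > 1"
    using prime_gt_1_nat[OF assms(1)] by simp
  have P: "P = convex hull (pow_vec (real p) ` weak_compositions e)"
    by (simp add: P_def factorisation_polytope_def vec_factorisations_prime_power[OF assms(1)])
  note faces = num_faces_pow_polytope[where 'd = 'd, OF p assms(2), folded P assms(3)]
  have vertices: "num_faces 0 P = (e + d - 1) choose (d - 1)"
    using num_vertices_pow_polytope[OF p, of e] by (simp add: P assms(3))
  have "card (box_bases e 1 :: ('d \<Rightarrow> nat) set) = (e - 1 + d - 1) choose (d - 1)"
    using assms(2) by (subst box_bases_one) (simp_all add: card_weak_compositions assms(3))
  also have "e - 1 + d - 1 = e + d - 2"
    using assms(2) by simp
  finally have edges: "num_faces 1 P = (d choose 2) + (d choose 2) * ((e + d - 2) choose (d - 1))"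
    using faces[of 1] by (simp add: numeral_2_eq_2)
  have middle: "int (num_faces k P) =
      int ((d + 1) choose (k + 1)) + int (d choose (k + 1)) * int ((e + d - 1) choose d)
      - int (d choose (k + 1)) * int ((e + d - 1 - k) choose d)" if "2 \<le> k" for k
  proof -
    have "int (num_faces k P) =
        int (d choose Suc k) + int (d choose k) + int (card (box_bases e k :: ('d \<Rightarrow> nat) set)) * int (d choose Suc k)"
      using faces[of k] that by simp
    also have "\<dots> = int (d choose Suc k) + int (d choose k)
        + (int ((e + d - 1) choose d) - int ((e + d - 1 - k) choose d)) * int (d choose Suc k)"
      by (simp only: card_box_bases[where 'd = 'd, folded assms(3)])
    finally show ?thesis
      by (simp add: algebra_simps)
  qed
  have top: "num_faces d P = 1"
    using faces[of d] assms(4) by simp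
  show ?thesis
    using vertices edges middle top by blast
qed

end
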